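(* Let $G$ be a finite group acting on a weighted metric graph with boundary $(\Sigma',\partial\Sigma')$ by harmonic maps preserving $\partial\Sigma'$. Then there exist a weighted metric graph with boundary $(\Sigma,\partial\Sigma)$ and a surjective harmonic map $\pi\colon\Sigma'\to\Sigma$ such that $\Sigma$ is the quotient of $\Sigma'$ by $G$. Moreover, such a quotient is unique up to harmonic isomorphism.
   Context: Weighted metric graph with boundary: finite multigraph without loop edges, with oriented edges $e$ of length $\ell(e)>0$, parametrizations $t_e\colon[0,\ell(e)]\to e$ ($t_{\bar e}(x)=t_e(\ell(e)-x)$), weights $w(e)=w(\bar e)\in\mathbb Z_{>0}$, and boundary $\partial\Sigma\subset V(\Sigma)$; subdivisions are allowed. A piecewise linear map $\phi\colon\Sigma'\to\Sigma$: continuous, and after subdivision vertices go to vertices, edges map homeomorphically onto edges or to vertices, if $\phi(v')\in\partial\Sigma$ and $\phi$ not constant near $v'$ then $v'\in\partial\Sigma'$, and $\phi\circ t_{e'}(x)=t_e(d_{e'}(\phi)x)$ with $d_{e'}(\phi)=\ell(e)/\ell(e')$ when $\phi(e')=e$ ($d_{e'}=0$ on contracted edges). $\phi$ is harmonic if for every vertex $v'\notin\partial\Sigma'$, $\sum_{e'^-=v',\,e'\mapsto e}\frac{w(e')}{w(e)}d_{e'}(\phi)$ is independent of the edge $e$ starting at $\phi(v')$. A harmonic isomorphism is a harmonic map with a harmonic inverse. $\Sigma$ is the quotient of $\Sigma'$ by $G$ (via $\pi$) if $\pi$ is a surjective harmonic map with $\pi\circ\sigma=\pi$ for all $\sigma\in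 G$, $G$ acts transitively on fibres of $\pi$, and $\pi^{-1}(\partial\Sigma)=\partial\Sigma'$. *)

theory Defs
  imports "HOL-Analysis.Analysis" "HOL-Algebra.Group_Action"
begin

text \<open>An oriented edge is a pair (length, parametrisation); the parametrisation
  is a map [0,len] to points, extended by undefined outside [0,len].\<close>
type_synonym 'p edge = "real \<times> (real \<Rightarrow> 'p)"

record 'p wmg =
  verts :: "'p set"
  edges :: "'p edge set"
  weight :: "'p edge \<Rightarrow> nat"
  bdry :: "'p set"

definition elen :: "'p edge \<Rightarrow> real" where "elen e = fst e"
definition epar :: "'p edge \<Rightarrow> real \<Rightarrow> 'p" where "epar e = snd e"
definition esrc :: "'p edge \<Rightarrow> 'p" where "esrc e = epar e 0"
definition etgt :: "'p edge \<Rightarrow> 'p" where "etgt e = epar e (elen e)"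

definition erev :: "'p edge \<Rightarrow> 'p edge" where
  "erev e = (elen e, \<lambda>x. if x \<in> {0..elen e} then epar e (elen e - x) else undefined)"

definition einterior :: "'p edge \<Rightarrow> 'p set" where
  "einterior e = epar e ` {0<..<elen e}"

definition points :: "('p, 'z) wmg_scheme \<Rightarrow> 'p set" where
  "points S = verts S \<union> (\<Union>e\<in>edges S. epar e ` {0..elen e})"

definition wf_wmg :: "'p wmg \<Rightarrow> bool" where
  "wf_wmg S \<longleftrightarrow>
     finite (verts S) \<and> finite (edges S) \<and> bdry S \<subseteq> verts S \<and>
     (\<forall>e\<in>edges S.
        elen e > 0 \<and>
        (\<forall>x. x \<notin> {0..elen e} \<longrightarrow> epar e x = undefined) \<and>
        inj_on (epar e) {0..elen e} \<and>
        esrc e \<in> verts S \<and> etgt e \<in> verts S \<and> esrc e \<noteq> etgt e \<and>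
        einterior e \<inter> verts S = {} \<and>
        erev e \<in> edges S \<and> weight S (erev e) = weight S e \<and> weight S e > 0) \<and>
     (\<forall>e1\<in>edges S. \<forall>e2\<in>edges S. e2 \<noteq> e1 \<and> e2 \<noteq> erev e1 \<longrightarrow>
        einterior e1 \<inter> einterior e2 = {})"

definition subdivision :: "'p wmg \<Rightarrow> 'p wmg \<Rightarrow> bool" where
  "subdivision T S \<longleftrightarrow>
     wf_wmg T \<and> points T = points S \<and> verts S \<subseteq> verts T \<and> bdry T = bdry S \<and>
     (\<forall>e'\<in>edges T. \<exists>e\<in>edges S. \<exists>a. 0 \<le> a \<and> a + elen e' \<le> elen e \<and>
        (\<forall>x\<in>{0..elen e'}. epar e' x = epar e (a + x)) \<and> weight T e' = weight S e)"

definition contracted :: "('p \<Rightarrow> 'q) \<Rightarrow> 'p edge \<Rightarrow> bool" where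
  "contracted \<phi> e' \<longleftrightarrow> (\<exists>v. \<forall>x\<in>{0..elen e'}. \<phi> (epar e' x) = v)"

definition maps_onto :: "('p \<Rightarrow> 'q) \<Rightarrow> 'p edge \<Rightarrow> 'q edge \<Rightarrow> bool" where
  "maps_onto \<phi> e' e \<longleftrightarrow>
     (\<forall>x\<in>{0..elen e'}. \<phi> (epar e' x) = epar e ((elen e / elen e') * x))"

definition pl_comb :: "'p wmg \<Rightarrow> 'q wmg \<Rightarrow> ('p \<Rightarrow> 'q) \<Rightarrow> bool" where
  "pl_comb S' S \<phi> \<longleftrightarrow>
     \<phi> ` points S' \<subseteq> points S \<and>
     \<phi> ` verts S' \<subseteq> verts S \<and>
     (\<forall>e'\<in>edges S'. contracted \<phi> e' \<or> (\<exists>e\<in>edges S. maps_onto \<phi> e' e)) \<and>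
     (\<forall>v'\<in>verts S'. \<phi> v' \<in> bdry S \<and>
        (\<exists>e'\<in>edges S'. esrc e' = v' \<and> \<not> contracted \<phi> e') \<longrightarrow> v' \<in> bdry S')"

definition harmonic_at :: "'p wmg \<Rightarrow> 'q wmg \<Rightarrow> ('p \<Rightarrow> 'q) \<Rightarrow> 'p \<Rightarrow> bool" where
  "harmonic_at S' S \<phi> v' \<longleftrightarrow>
     (\<exists>c. \<forall>e\<in>edges S. esrc e = \<phi> v' \<longrightarrow>
        (\<Sum>e'\<in>{e'\<in>edges S'. esrc e' = v' \<and> maps_onto \<phi> e' e}.
            (real (weight S' e') / real (weight S e)) * (elen e / elen e')) = c)"

definition pl_map :: "'p wmg \<Rightarrow> 'q wmg \<Rightarrow> ('p \<Rightarrow> 'q) \<Rightarrow> bool" where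
  "pl_map S' S \<phi> \<longleftrightarrow>
     (\<exists>T' T. subdivision T' S' \<and> subdivision T S \<and> pl_comb T' T \<phi>)"

definition harmonic :: "'p wmg \<Rightarrow> 'q wmg \<Rightarrow> ('p \<Rightarrow> 'q) \<Rightarrow> bool" where
  "harmonic S' S \<phi> \<longleftrightarrow>
     (\<exists>T' T. subdivision T' S' \<and> subdivision T S \<and> pl_comb T' T \<phi> \<and>
        (\<forall>v'\<in>verts T' - bdry T'. harmonic_at T' T \<phi> v'))"

definition harmonic_iso :: "'p wmg \<Rightarrow> 'q wmg \<Rightarrow> ('p \<Rightarrow> 'q) \<Rightarrow> bool" where
  "harmonic_iso S' S \<phi> \<longleftrightarrow>
     harmonic S' S \<phi> \<and>
     (\<exists>\<psi>. harmonic S S' \<psi> \<and> (\<forall>x\<in>points S'. \<psi> (\<phi> x) = x) \<and> (\<forall>y\<in>points S. \<phi> (\<psi> y) = y))"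

definition is_quotient ::
  "('g, 'm) monoid_scheme \<Rightarrow> ('g \<Rightarrow> 'p \<Rightarrow> 'p) \<Rightarrow> 'p wmg \<Rightarrow> 'q wmg \<Rightarrow> ('p \<Rightarrow> 'q) \<Rightarrow> bool" where
  "is_quotient G act S' S \<pi> \<longleftrightarrow>
     harmonic S' S \<pi> \<and> \<pi> ` points S' = points S \<and>
     (\<forall>g\<in>carrier G. \<forall>x\<in>points S'. \<pi> (act g x) = \<pi> x) \<and>
     (\<forall>x\<in>points S'. \<forall>y\<in>points S'. \<pi> x = \<pi> y \<longrightarrow> (\<exists>g\<in>carrier G. act g x = y)) \<and>
     {x\<in>points S'. \<pi> x \<in> bdry S} = bdry S'"

end

theory Submission
  imports Defs
begin

text \<open>Existence: subdivide \<open>S'\<close> at the orbits of the vertices of all models in which some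
  \<open>act g\<close> is piecewise linear, and then at the midpoints of the resulting edges. In this invariant
  model every \<open>act g\<close> is piecewise linear and harmonic and no element reverses an edge, so the orbit
  map onto the graph of vertex orbits and edge orbits is piecewise linear; with suitably chosen edge
  lengths it is harmonic.

  Uniqueness: two quotient maps have the same fibres, namely the orbits, so each factors through
  the other. After refining all models at a common finite union of fibres, such a factor of harmonic
  maps without contracted edges is harmonic, its local degrees being ratios of local degrees.\<close>

lemma elen_pair[simp]: "elen (a, f) = a" and epar_pair[simp]: "epar (a, f) = f"
  by (simp_all add: elen_def epar_def)

lemma erev_len[simp]: "elen (erev e) = elen e"
  by (simp add: erev_def elen_def)

lemma erev_par: "x \<in> {0..elen e} \<Longrightarrow> epar (erev e) x = epar e (elen e - x)"
  by (simp add: erev_def epar_def elen_def)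

lemma erev_src: "elen e \<ge> 0 \<Longrightarrow> esrc (erev e) = etgt e"
  by (simp add: esrc_def etgt_def erev_par)

lemma erev_erev:
  assumes "\<forall>x. x \<notin> {0..elen e} \<longrightarrow> epar e x = undefined"
  shows "erev (erev e) = e"
proof -
  obtain a f where e: "e = (a, f)" by (cases e)
  have "\<And>x. x \<notin> {0..a} \<Longrightarrow> f x = undefined" using assms e by (simp add: epar_def elen_def)
  then show ?thesis unfolding e erev_def elen_def epar_def by (auto simp: fun_eq_iff)
qed

lemma
  assumes "wf_wmg S"
  shows wf_finite_verts: "finite (verts S)"
    and wf_finite_edges: "finite (edges S)"
    and wf_bdry_verts: "bdry S \<subseteq> verts S"
  using assms unfolding wf_wmg_def by auto

lemma
  assumes "wf_wmg S" and "e \<in> edges S"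
  shows wf_elen_pos: "elen e > 0"
    and wf_epar_undefined: "\<forall>x. x \<notin> {0..elen e} \<longrightarrow> epar e x = undefined"
    and wf_epar_inj_on: "inj_on (epar e) {0..elen e}"
    and wf_esrc_vert: "esrc e \<in> verts S"
    and wf_etgt_vert: "etgt e \<in> verts S"
    and wf_esrc_ne_etgt: "esrc e \<noteq> etgt e"
    and wf_einterior_verts: "einterior e \<inter> verts S = {}"
    and wf_erev_edge: "erev e \<in> edges S"
    and wf_weight_erev: "weight S (erev e) = weight S e"
    and wf_weight_pos: "weight S e > 0"
  using assms unfolding wf_wmg_def by auto

lemma wf_interiors_disjoint:
  assumes "wf_wmg S" "e1 \<in> edges S" "e2 \<in> edges S" "e2 \<noteq> e1" "e2 \<noteq> erev e1"
  shows "einterior e1 \<inter> einterior e2 = {}"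
  using assms unfolding wf_wmg_def by auto

lemma wf_erev_erev: "wf_wmg S \<Longrightarrow> e \<in> edges S \<Longrightarrow> erev (erev e) = e"
  by (rule erev_erev[OF wf_epar_undefined])

lemma wf_erev_neq: "wf_wmg S \<Longrightarrow> e \<in> edges S \<Longrightarrow> erev e \<noteq> e"
  by (metis erev_src less_eq_real_def wf_elen_pos wf_esrc_ne_etgt)

lemma wf_epar_eqD:
  "wf_wmg S \<Longrightarrow> e \<in> edges S \<Longrightarrow> x \<in> {0..elen e} \<Longrightarrow> y \<in> {0..elen e} \<Longrightarrow> epar e x = epar e y
    \<Longrightarrow> x = y"
  using wf_epar_inj_on by (metis inj_onD)

lemma wf_interior_notvert:
  assumes "wf_wmg S" "e \<in> edges S" "0 < t" "t < elen e"
  shows "epar e t \<notin> verts S"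
proof -
  have "epar e t \<in> einterior e" using assms(3,4) unfolding einterior_def by auto
  then show ?thesis using wf_einterior_verts[OF assms(1,2)] by blast
qed

lemma verts_subset_points: "verts S \<subseteq> points S"
  unfolding points_def by auto

lemma epar_in_points: "e \<in> edges S \<Longrightarrow> t \<in> {0..elen e} \<Longrightarrow> epar e t \<in> points S"
  unfolding points_def by blast

lemma points_cases:
  assumes wf: "wf_wmg S" and x: "x \<in> points S"
  shows "x \<in> verts S \<or> (\<exists>e\<in>edges S. \<exists>t. 0 < t \<and> t < elen e \<and> x = epar e t)"
proof (cases "x \<in> verts S")
  case nv: False
  then obtain e t where e: "e \<in> edges S" "t \<in> {0..elen e}" "x = epar e t"
    using x unfolding points_def by blast
  have "t \<noteq> 0" "t \<noteq> elen e"
    using e nv wf_esrc_vert[OF wf e(1)] wf_etgt_vert[OF wf e(1)] by (auto simp: esrc_def etgt_def)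
  then show ?thesis using e by (intro disjI2 bexI[of _ e] exI[of _ t]) auto
qed simp

lemma wf_interior_point_eq:
  assumes wf: "wf_wmg S" and e1: "e1 \<in> edges S" and e2: "e2 \<in> edges S"
    and s: "0 < s" "s < elen e1" and t: "0 < t" "t < elen e2" and eq: "epar e1 s = epar e2 t"
  shows "(e2 = e1 \<and> t = s) \<or> (e2 = erev e1 \<and> t = elen e1 - s)"
proof -
  have i: "epar e1 s \<in> einterior e1" "epar e2 t \<in> einterior e2"
    using s t unfolding einterior_def by auto
  have "e2 = e1 \<or> e2 = erev e1"
  proof (rule ccontr)
    assume "\<not> (e2 = e1 \<or> e2 = erev e1)"
    then have "einterior e1 \<inter> einterior e2 = {}" using wf_interiors_disjoint[OF wf e1 e2] by blast
    then show False using i eq by auto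
  qed
  then show ?thesis
  proof
    assume "e2 = e1"
    then show ?thesis using wf_epar_eqD[OF wf e1, of s t] s t eq by auto
  next
    assume h: "e2 = erev e1"
    then have "epar e1 (elen e1 - t) = epar e1 s" using t eq by (simp add: erev_par)
    then show ?thesis using wf_epar_eqD[OF wf e1, of "elen e1 - t" s] s t h by auto
  qed
qed

text \<open>Sampling at two interior points of \<open>[0, L]\<close> pins down both the edge and the affine
  change of parameter.\<close>

lemma wf_affine_agree_eq:
  assumes wf: "wf_wmg S" and e1: "e1 \<in> edges S" and e2: "e2 \<in> edges S"
    and L: "L > 0" and b: "\<beta> > 0" and d: "\<delta> > 0"
    and H: "\<And>x. 0 \<le> x \<Longrightarrow> x \<le> L \<Longrightarrow> \<alpha> + \<beta>*x \<in> {0..elen e1} \<and> \<gamma> + \<delta>*x \<in> {0..elen e2}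
              \<and> epar e1 (\<alpha> + \<beta>*x) = epar e2 (\<gamma> + \<delta>*x)"
  shows "e2 = e1 \<and> \<gamma> = \<alpha> \<and> \<delta> = \<beta>"
proof -
  have a0: "0 \<le> \<alpha>" "\<alpha> + \<beta>*L \<le> elen e1" and c0: "0 \<le> \<gamma>" "\<gamma> + \<delta>*L \<le> elen e2"
    using H[of 0] H[of L] L by auto
  have sample: "(e2 = e1 \<and> \<gamma>+\<delta>*x = \<alpha>+\<beta>*x) \<or> (e2 = erev e1 \<and> \<gamma>+\<delta>*x = elen e1 - (\<alpha>+\<beta>*x))"
    if x: "0 < x" "x < L" for x
  proof (rule wf_interior_point_eq[OF wf e1 e2])
    have "\<beta>*x < \<beta>*L" "\<delta>*x < \<delta>*L" "\<beta>*x > 0" "\<delta>*x > 0" using b d x by simp_all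
    then show "0 < \<alpha>+\<beta>*x" "\<alpha>+\<beta>*x < elen e1" "0 < \<gamma>+\<delta>*x" "\<gamma>+\<delta>*x < elen e2"
      using a0 c0 by linarith+
    show "epar e1 (\<alpha>+\<beta>*x) = epar e2 (\<gamma>+\<delta>*x)" using H[of x] x by simp
  qed
  define x1 x2 where "x1 = L/3" and "x2 = 2*L/3"
  have x: "0 < x1" "x1 < L" "0 < x2" "x2 < L" "x1 < x2" using L by (auto simp: x1_def x2_def)
  note C1 = sample[OF x(1,2)] and C2 = sample[OF x(3,4)]
  show ?thesis
  proof (cases "e2 = e1")
    case True
    then have q1: "\<gamma>+\<delta>*x1 = \<alpha>+\<beta>*x1" and q2: "\<gamma>+\<delta>*x2 = \<alpha>+\<beta>*x2"
      using C1 C2 wf_erev_neq[OF wf e1] by auto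
    have "(\<delta> - \<beta>) * (x2 - x1) = 0" using q1 q2 by (simp add: algebra_simps)
    then have "\<delta> = \<beta>" using x by simp
    then show ?thesis using True q1 by simp
  next
    case False
    then have q1: "\<gamma>+\<delta>*x1 = elen e1 - (\<alpha>+\<beta>*x1)" and q2: "\<gamma>+\<delta>*x2 = elen e1 - (\<alpha>+\<beta>*x2)"
      using C1 C2 by auto
    have "(\<delta> + \<beta>) * (x2 - x1) = 0" using q1 q2 by (simp add: algebra_simps)
    then show ?thesis using b d x by simp
  qed
qed

lemma rescale_in_range:
  fixes a b x :: real
  assumes "0 < a" "0 \<le> b" "x \<in> {0..a}"
  shows "b / a * x \<in> {0..b}"
proof -
  have "b / a * x \<le> b / a * a" using assms by (intro mult_left_mono) auto
  then show ?thesis using assms by auto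
qed

lemma rescale_in_interior:
  fixes a b x :: real
  assumes "0 < a" "0 < b" "0 < x" "x < a"
  shows "0 < b / a * x" "b / a * x < b"
  using assms by (auto simp: field_simps)

lemma maps_onto_unique:
  assumes wf: "wf_wmg S" and e: "e \<in> edges S" and e': "e' \<in> edges S" and p: "elen p > 0"
    and m1: "maps_onto \<phi> p e" and m2: "maps_onto \<phi> p e'"
  shows "e' = e"
proof -
  have l: "elen e > 0" "elen e' > 0" using wf_elen_pos[OF wf e] wf_elen_pos[OF wf e'] by auto
  have "e' = e \<and> 0 = (0::real) \<and> elen e'/elen p = elen e/elen p"
  proof (rule wf_affine_agree_eq[OF wf e e' p])
    fix x assume x: "0 \<le> x" "x \<le> elen p"
    show "0 + elen e / elen p * x \<in> {0..elen e} \<and> 0 + elen e' / elen p * x \<in> {0..elen e'} \<and>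
          epar e (0 + elen e / elen p * x) = epar e' (0 + elen e' / elen p * x)"
      using rescale_in_range[OF p, of "elen e" x] rescale_in_range[OF p, of "elen e'" x] l m1 m2 x
      unfolding maps_onto_def by auto
  qed (use l p in auto)
  then show ?thesis by simp
qed

definition seg :: "'p edge \<Rightarrow> real \<Rightarrow> 'p edge \<Rightarrow> bool" where
  "seg f c p \<longleftrightarrow> 0 \<le> c \<and> c + elen p \<le> elen f \<and> (\<forall>x\<in>{0..elen p}. epar p x = epar f (c + x))"

lemma segD: "seg f c p \<Longrightarrow> 0 \<le> x \<Longrightarrow> x \<le> elen p \<Longrightarrow> epar p x = epar f (c + x)"
  unfolding seg_def by auto

lemma seg_bounds: "seg f c p \<Longrightarrow> 0 \<le> c \<and> c + elen p \<le> elen f"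
  unfolding seg_def by auto

lemma seg_trans: "seg e a f \<Longrightarrow> seg f c p \<Longrightarrow> seg e (a + c) p"
  unfolding seg_def by (auto simp: add.assoc)

lemma seg_erev:
  assumes "seg f c p" "elen p \<ge> 0"
  shows "seg (erev f) (elen f - c - elen p) (erev p)"
  unfolding seg_def
proof (intro conjI ballI)
  show "0 \<le> elen f - c - elen p" "elen f - c - elen p + elen (erev p) \<le> elen (erev f)"
    using assms unfolding seg_def by auto
  fix x assume x: "x \<in> {0..elen (erev p)}"
  have "epar (erev p) x = epar p (elen p - x)" using x by (simp add: erev_par)
  also have "\<dots> = epar f (c + (elen p - x))" using assms x unfolding seg_def by auto
  also have "\<dots> = epar (erev f) (elen f - c - elen p + x)"
    using assms x unfolding seg_def by (auto simp: erev_par)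
  finally show "epar (erev p) x = epar (erev f) (elen f - c - elen p + x)" .
qed

lemma seg_offset_unique:
  assumes wf: "wf_wmg X" and a: "a \<in> edges X" and b: "b \<in> edges X"
    and sa: "seg f c a" and sb: "seg f c b"
  shows "b = a"
proof -
  define L where "L = min (elen a) (elen b)"
  have L: "L > 0" using wf_elen_pos[OF wf a] wf_elen_pos[OF wf b] L_def by simp
  have "a = b \<and> 0 = (0::real) \<and> 1 = (1::real)"
  proof (rule wf_affine_agree_eq[OF wf b a L])
    fix x assume x: "0 \<le> x" "x \<le> L"
    show "0 + 1 * x \<in> {0..elen b} \<and> 0 + 1 * x \<in> {0..elen a} \<and> epar b (0 + 1 * x) = epar a (0 + 1 * x)"
      using segD[OF sa, of x] segD[OF sb, of x] x L_def by auto
  qed auto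
  then show ?thesis by simp
qed

lemma seg_parent_unique:
  assumes wf: "wf_wmg X" and f1: "f1 \<in> edges X" and f2: "f2 \<in> edges X"
    and s1: "seg f1 c1 p" and s2: "seg f2 c2 p" and lp: "elen p > 0"
  shows "f2 = f1 \<and> c2 = c1"
proof -
  have "f2 = f1 \<and> c2 = c1 \<and> 1 = (1::real)"
  proof (rule wf_affine_agree_eq[OF wf f1 f2 lp])
    fix x assume x: "0 \<le> x" "x \<le> elen p"
    show "c1 + 1 * x \<in> {0..elen f1} \<and> c2 + 1 * x \<in> {0..elen f2} \<and> epar f1 (c1 + 1 * x) = epar f2 (c2 + 1 * x)"
      using segD[OF s1, of x] segD[OF s2, of x] x s1 s2 unfolding seg_def by auto
  qed auto
  then show ?thesis by simp
qed

lemma subdivisionD: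
  assumes "subdivision T S" "f \<in> edges T"
  shows "\<exists>e\<in>edges S. \<exists>a. seg e a f \<and> weight T f = weight S e"
  using assms unfolding subdivision_def seg_def by blast

lemma subdivision_wf: "subdivision T S \<Longrightarrow> wf_wmg T"
  and subdivision_points: "subdivision T S \<Longrightarrow> points T = points S"
  and subdivision_verts: "subdivision T S \<Longrightarrow> verts S \<subseteq> verts T"
  and subdivision_bdry: "subdivision T S \<Longrightarrow> bdry T = bdry S"
  unfolding subdivision_def by auto

lemma subdivision_refl: "wf_wmg S \<Longrightarrow> subdivision S S"
  unfolding subdivision_def by (auto intro!: bexI exI[of _ 0])

lemma subdivision_seg_through:
  assumes wf: "wf_wmg S" and T: "subdivision T S" and e: "e \<in> edges S"
    and s: "0 < s" "s < elen e" and nv: "epar e s \<notin> verts T"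
  shows "\<exists>f\<in>edges T. \<exists>a. seg e a f \<and> a < s \<and> s < a + elen f"
proof -
  have wfT: "wf_wmg T" using subdivision_wf[OF T] .
  have "epar e s \<in> points T" using subdivision_points[OF T] epar_in_points[OF e, of s] s by auto
  then obtain f t where f: "f \<in> edges T" "0 < t" "t < elen f" "epar e s = epar f t"
    using points_cases[OF wfT] nv by blast
  obtain e2 a2 where e2: "e2 \<in> edges S" "seg e2 a2 f" using subdivisionD[OF T f(1)] by blast
  have "(e2 = e \<and> a2 + t = s) \<or> (e2 = erev e \<and> a2 + t = elen e - s)"
    using wf_interior_point_eq[OF wf e e2(1) s] seg_bounds[OF e2(2)] segD[OF e2(2), of t] f by auto
  then show ?thesis
  proof
    assume "e2 = e \<and> a2 + t = s"
    then show ?thesis using f e2 by (intro bexI[of _ f] exI[of _ a2]) auto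
  next
    assume h: "e2 = erev e \<and> a2 + t = elen e - s"
    have "seg (erev e2) (elen e2 - a2 - elen f) (erev f)"
      using seg_erev[OF e2(2)] wf_elen_pos[OF wfT f(1)] by simp
    moreover have "erev e2 = e" using h wf_erev_erev[OF wf e] by simp
    ultimately show ?thesis using h f wf_erev_edge[OF wfT f(1)]
      by (intro bexI[of _ "erev f"] exI[of _ "elen e2 - a2 - elen f"]) auto
  qed
qed

lemma subdivision_edge_between:
  assumes wf: "wf_wmg S" and T: "subdivision T S" and e: "e \<in> edges S"
    and ab: "0 \<le> a" "a < b" "b \<le> elen e"
    and va: "epar e a \<in> verts T" and vb: "epar e b \<in> verts T"
    and nv: "\<And>s. a < s \<Longrightarrow> s < b \<Longrightarrow> epar e s \<notin> verts T"
  shows "\<exists>q\<in>edges T. elen q = b - a \<and> seg e a q"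
proof -
  have wfT: "wf_wmg T" using subdivision_wf[OF T] .
  obtain q d where q: "q \<in> edges T" "seg e d q" "d < (a+b)/2" "(a+b)/2 < d + elen q"
    using subdivision_seg_through[OF wf T e, of "(a+b)/2"] nv ab by auto
  have lq: "elen q > 0" using wf_elen_pos[OF wfT q(1)] .
  have vd: "epar e d \<in> verts T" and vdq: "epar e (d + elen q) \<in> verts T"
    using wf_esrc_vert[OF wfT q(1)] wf_etgt_vert[OF wfT q(1)] segD[OF q(2)] lq
    by (auto simp: esrc_def etgt_def)
  have qint: "epar e y \<notin> verts T" if "d < y" "y < d + elen q" for y
    using wf_interior_notvert[OF wfT q(1), of "y - d"] segD[OF q(2), of "y - d"] that by auto
  have "\<not> a < d" using nv[of d] vd q(3) ab by auto
  moreover have "\<not> d + elen q < b" using nv[of "d + elen q"] vdq q(4) ab by auto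
  moreover have "\<not> d < a" using qint[of a] va q(4) ab by auto
  moreover have "\<not> b < d + elen q" using qint[of b] vb q(3) ab by auto
  ultimately have "d = a" "elen q = b - a" by linarith+
  then show ?thesis using q(1,2) by blast
qed

lemma subdivision_edge_seg:
  assumes wf: "wf_wmg S" and X: "subdivision X S" and Y: "subdivision Y S"
    and vv: "verts X \<subseteq> verts Y" and p: "p \<in> edges Y"
  shows "\<exists>f\<in>edges X. \<exists>c. seg f c p"
proof -
  have wfX: "wf_wmg X" and wfY: "wf_wmg Y" using X Y subdivision_wf by auto
  obtain e a where e: "e \<in> edges S" "seg e a p" using subdivisionD[OF Y p] by blast
  have lp: "elen p > 0" using wf_elen_pos[OF wfY p] .
  have ea: "0 \<le> a" "a + elen p \<le> elen e" using seg_bounds[OF e(2)] by auto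
  have pint: "epar e (a + y) \<notin> verts X" if "0 < y" "y < elen p" for y
    using wf_interior_notvert[OF wfY p that] segD[OF e(2), of y] that vv by auto
  obtain f b where f: "f \<in> edges X" "seg e b f" "b < a + elen p / 2" "a + elen p / 2 < b + elen f"
    using subdivision_seg_through[OF wf X e(1), of "a + elen p / 2"] pint[of "elen p / 2"] ea lp
    by auto
  have lf: "elen f > 0" using wf_elen_pos[OF wfX f(1)] .
  have "epar e b \<in> verts X" "epar e (b + elen f) \<in> verts X"
    using wf_esrc_vert[OF wfX f(1)] wf_etgt_vert[OF wfX f(1)] segD[OF f(2)] lf
    by (auto simp: esrc_def etgt_def)
  then have "\<not> (a < b \<and> b < a + elen p)" "\<not> (a < b + elen f \<and> b + elen f < a + elen p)"
    using pint[of "b - a"] pint[of "b + elen f - a"] by auto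
  then have "b \<le> a" "a + elen p \<le> b + elen f" using f(3,4) by linarith+
  then have "seg f (a - b) p"
    using e(2) f(2) seg_bounds[OF f(2)] unfolding seg_def by auto
  then show ?thesis using f(1) by blast
qed

lemma subdivision_seg_weight:
  assumes wf: "wf_wmg S" and T: "subdivision T S"
    and e: "e \<in> edges S" and p: "p \<in> edges T" and s: "seg e c p"
  shows "weight T p = weight S e"
proof -
  obtain e' c' where e': "e' \<in> edges S" "seg e' c' p" "weight T p = weight S e'"
    using subdivisionD[OF T p] by blast
  have "e' = e"
    using seg_parent_unique[OF wf e e'(1) s e'(2) wf_elen_pos[OF subdivision_wf[OF T] p]] by simp
  then show ?thesis using e' by simp
qed

lemma subdivision_finer:
  assumes wf: "wf_wmg S" and X: "subdivision X S" and Y: "subdivision Y S"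
    and vv: "verts X \<subseteq> verts Y"
  shows "subdivision Y X"
  unfolding subdivision_def
proof (intro conjI ballI)
  fix p assume p: "p \<in> edges Y"
  obtain f c where f: "f \<in> edges X" "seg f c p" using subdivision_edge_seg[OF wf X Y vv p] by blast
  obtain e a where e: "e \<in> edges S" "seg e a f" "weight X f = weight S e"
    using subdivisionD[OF X f(1)] by blast
  have "weight Y p = weight X f"
    using subdivision_seg_weight[OF wf Y e(1) p seg_trans[OF e(2) f(2)]] e(3) by simp
  then show "\<exists>e\<in>edges X. \<exists>a. 0 \<le> a \<and> a + elen p \<le> elen e \<and>
      (\<forall>x\<in>{0..elen p}. epar p x = epar e (a + x)) \<and> weight Y p = weight X e"
    using f unfolding seg_def by blast
qed (use subdivision_wf[OF Y] subdivision_points[OF X] subdivision_points[OF Y] vv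
      subdivision_bdry[OF X] subdivision_bdry[OF Y] in auto)


section \<open>Subdividing at a finite set of points\<close>

definition param_set :: "'p set \<Rightarrow> 'p edge \<Rightarrow> real set" where
  "param_set P e = {t\<in>{0..elen e}. epar e t \<in> P}"

definition consecutive :: "'p set \<Rightarrow> 'p edge \<Rightarrow> real \<Rightarrow> real \<Rightarrow> bool" where
  "consecutive P e a b \<longleftrightarrow>
     a \<in> param_set P e \<and> b \<in> param_set P e \<and> a < b \<and> (\<forall>t\<in>param_set P e. t \<le> a \<or> b \<le> t)"

definition piece :: "'p edge \<Rightarrow> real \<Rightarrow> real \<Rightarrow> 'p edge" where
  "piece e a b = (b - a, \<lambda>x. if x \<in> {0..b-a} then epar e (a + x) else undefined)"

text \<open>The weight of a piece is inherited from the unique edge it comes from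
  (see \<open>subdivide_at_weight\<close>).\<close>

definition subdivide_at :: "'p wmg \<Rightarrow> 'p set \<Rightarrow> 'p wmg" where
  "subdivide_at S P = \<lparr>verts = P, edges = {piece e a b | e a b. e \<in> edges S \<and> consecutive P e a b},
     weight = (\<lambda>q. weight S (SOME e. e \<in> edges S \<and> (\<exists>a b. consecutive P e a b \<and> q = piece e a b))),
     bdry = bdry S\<rparr>"

lemma piece_len[simp]: "elen (piece e a b) = b - a"
  by (simp add: piece_def)

lemma piece_par: "x \<in> {0..b-a} \<Longrightarrow> epar (piece e a b) x = epar e (a + x)"
  by (simp add: piece_def)

lemma piece_undef: "x \<notin> {0..b-a} \<Longrightarrow> epar (piece e a b) x = undefined"
  by (auto simp: piece_def)

lemma consecutive_range: "consecutive P e a b \<Longrightarrow> 0 \<le> a \<and> b \<le> elen e \<and> a < b"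
  unfolding consecutive_def param_set_def by auto

lemma piece_seg: "consecutive P e a b \<Longrightarrow> seg e a (piece e a b)"
  using consecutive_range[of P e a b] unfolding seg_def by (auto simp: piece_par)

lemma param_set_erev_iff:
  "elen e \<ge> 0 \<Longrightarrow> t \<in> param_set P (erev e) \<longleftrightarrow> elen e - t \<in> param_set P e"
  unfolding param_set_def by (auto simp: erev_par)

lemma consecutive_erev:
  assumes "elen e \<ge> 0"
  shows "consecutive P (erev e) a b \<longleftrightarrow> consecutive P e (elen e - b) (elen e - a)"
proof -
  note m = param_set_erev_iff[OF assms]
  have "(\<forall>t\<in>param_set P (erev e). t \<le> a \<or> b \<le> t) \<longleftrightarrow>
        (\<forall>u\<in>param_set P e. u \<le> elen e - b \<or> elen e - a \<le> u)"
  proof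
    assume h: "\<forall>t\<in>param_set P (erev e). t \<le> a \<or> b \<le> t"
    show "\<forall>u\<in>param_set P e. u \<le> elen e - b \<or> elen e - a \<le> u"
    proof
      fix u assume "u \<in> param_set P e"
      then have "elen e - u \<in> param_set P (erev e)" using m[of "elen e - u"] by simp
      then show "u \<le> elen e - b \<or> elen e - a \<le> u" using h by force
    qed
  next
    assume h: "\<forall>u\<in>param_set P e. u \<le> elen e - b \<or> elen e - a \<le> u"
    show "\<forall>t\<in>param_set P (erev e). t \<le> a \<or> b \<le> t"
    proof
      fix t assume "t \<in> param_set P (erev e)"
      then have "elen e - t \<in> param_set P e" using m by simp
      then show "t \<le> a \<or> b \<le> t" using h by force
    qed
  qed
  then show ?thesis unfolding consecutive_def using m[of a] m[of b] by auto
qed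

lemma erev_piece:
  assumes "consecutive P e a b"
  shows "erev (piece e a b) = piece (erev e) (elen e - b) (elen e - a)"
proof -
  have r: "0 \<le> a" "b \<le> elen e" "a < b" using consecutive_range[OF assms] by auto
  have "epar (erev (piece e a b)) x = epar (piece (erev e) (elen e - b) (elen e - a)) x" for x
  proof (cases "x \<in> {0..b-a}")
    case True
    then have "epar (erev (piece e a b)) x = epar e (a + (b - a - x))"
      by (simp add: erev_par piece_par)
    moreover have "epar (piece (erev e) (elen e - b) (elen e - a)) x = epar e (elen e - (elen e - b + x))"
      using True r by (simp add: piece_par erev_par)
    ultimately show ?thesis by (simp add: algebra_simps)
  next
    case False
    then show ?thesis by (auto simp: erev_def piece_def epar_def elen_def)
  qed
  then show ?thesis by (simp add: prod_eq_iff epar_def fun_eq_iff erev_def piece_def)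
qed

lemma param_set_finite:
  assumes wf: "wf_wmg S" and e: "e \<in> edges S" and P: "finite P"
  shows "finite (param_set P e)"
proof -
  have "inj_on (epar e) (param_set P e)" using wf_epar_inj_on[OF wf e] unfolding param_set_def
    by (rule inj_on_subset) auto
  moreover have "epar e ` param_set P e \<subseteq> P" unfolding param_set_def by auto
  ultimately show ?thesis using P finite_imageD finite_subset by metis
qed

lemma piece_inj:
  assumes wf: "wf_wmg S" and e: "e \<in> edges S" and e2: "e2 \<in> edges S"
    and c1: "consecutive P e a b" and c2: "consecutive P e2 c d" and eq: "piece e a b = piece e2 c d"
  shows "e2 = e \<and> c = a \<and> d = b"
proof -
  have "seg e2 c (piece e a b)" using piece_seg[OF c2] eq by simp
  moreover have "elen (piece e a b) > 0" using consecutive_range[OF c1] by simp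
  ultimately have "e2 = e \<and> c = a" using seg_parent_unique[OF wf e e2 piece_seg[OF c1]] by blast
  moreover have "d - c = b - a" using arg_cong[OF eq, of elen] by simp
  ultimately show ?thesis by simp
qed

lemma consecutive_unique:
  assumes "consecutive P e a1 b1" "consecutive P e a2 b2" "a1 < s" "s < b1" "a2 < s" "s < b2"
  shows "a1 = a2 \<and> b1 = b2"
proof -
  have "a2 \<le> a1 \<or> b1 \<le> a2" "b2 \<le> a1 \<or> b1 \<le> b2" "a1 \<le> a2 \<or> b2 \<le> a1" "b1 \<le> a2 \<or> b2 \<le> b1"
    using assms unfolding consecutive_def by blast+
  then show ?thesis using assms(3-6) by linarith
qed

lemma consecutive_around:
  assumes wf: "wf_wmg S" and e: "e \<in> edges S" and P: "finite P" "verts S \<subseteq> P"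
    and t: "0 < t" "t < elen e" "epar e t \<notin> P"
  obtains a b where "consecutive P e a b" "a < t" "t < b"
proof -
  let ?A = "param_set P e"
  have fin: "finite {s\<in>?A. s \<le> t}" "finite {s\<in>?A. t \<le> s}"
    using param_set_finite[OF wf e P(1)] by auto
  have "0 \<in> {s\<in>?A. s \<le> t}" "elen e \<in> {s\<in>?A. t \<le> s}"
    using wf_esrc_vert[OF wf e] wf_etgt_vert[OF wf e] wf_elen_pos[OF wf e] P(2) t
    unfolding param_set_def esrc_def etgt_def by auto
  then have a: "Max {s\<in>?A. s \<le> t} \<in> ?A" "Max {s\<in>?A. s \<le> t} \<le> t"
    and b: "Min {s\<in>?A. t \<le> s} \<in> ?A" "t \<le> Min {s\<in>?A. t \<le> s}"
    using Max_in[OF fin(1)] Min_in[OF fin(2)] by auto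
  have "t \<notin> ?A" using t unfolding param_set_def by auto
  then have "Max {s\<in>?A. s \<le> t} < t" "t < Min {s\<in>?A. t \<le> s}"
    using a b by (metis order_le_less)+
  moreover have "consecutive P e (Max {s\<in>?A. s \<le> t}) (Min {s\<in>?A. t \<le> s})"
    unfolding consecutive_def
  proof (intro conjI ballI)
    fix u assume u: "u \<in> ?A"
    show "u \<le> Max {s\<in>?A. s \<le> t} \<or> Min {s\<in>?A. t \<le> s} \<le> u"
      using Max_ge[OF fin(1)] Min_le[OF fin(2)] u by (cases "u \<le> t") auto
  qed (use a b calculation in auto)
  ultimately show ?thesis using that by blast
qed

lemma subdivide_at_simps[simp]:
  "verts (subdivide_at S P) = P" "bdry (subdivide_at S P) = bdry S"
  "edges (subdivide_at S P) = {piece e a b | e a b. e \<in> edges S \<and> consecutive P e a b}"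
  by (simp_all add: subdivide_at_def)

lemma subdivide_at_edgeI: "e \<in> edges S \<Longrightarrow> consecutive P e a b \<Longrightarrow> piece e a b \<in> edges (subdivide_at S P)"
  unfolding subdivide_at_simps by blast

lemma subdivide_at_edgeE:
  assumes "q \<in> edges (subdivide_at S P)"
  obtains e a b where "e \<in> edges S" "consecutive P e a b" "q = piece e a b"
  using assms by auto

lemma subdivide_at_weight:
  assumes wf: "wf_wmg S" and e: "e \<in> edges S" and c: "consecutive P e a b"
  shows "weight (subdivide_at S P) (piece e a b) = weight S e"
proof -
  let ?Q = "\<lambda>e'. e' \<in> edges S \<and> (\<exists>a' b'. consecutive P e' a' b' \<and> piece e a b = piece e' a' b')"
  have "?Q (SOME e'. ?Q e')" using e c by (intro someI[of ?Q e]) blast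
  then have "(SOME e'. ?Q e') = e" using piece_inj[OF wf e _ c] by blast
  then show ?thesis by (simp add: subdivide_at_def)
qed

lemma finite_edges_subdivide_at:
  assumes wf: "wf_wmg S" and P: "finite P"
  shows "finite (edges (subdivide_at S P))"
proof (rule finite_subset)
  show "edges (subdivide_at S P) \<subseteq> (\<Union>e\<in>edges S. (\<lambda>(a,b). piece e a b) ` (param_set P e \<times> param_set P e))"
  proof
    fix q assume "q \<in> edges (subdivide_at S P)"
    then obtain e a b where e: "e \<in> edges S" "consecutive P e a b" "q = piece e a b"
      by (rule subdivide_at_edgeE)
    then have "q \<in> (\<lambda>(a,b). piece e a b) ` (param_set P e \<times> param_set P e)"
      unfolding consecutive_def by (auto intro: image_eqI[of _ _ "(a, b)"])
    then show "q \<in> (\<Union>e\<in>edges S. (\<lambda>(a,b). piece e a b) ` (param_set P e \<times> param_set P e))"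
      using e(1) by blast
  qed
  show "finite (\<Union>e\<in>edges S. (\<lambda>(a,b). piece e a b) ` (param_set P e \<times> param_set P e))"
    using wf_finite_edges[OF wf] param_set_finite[OF wf _ P] by auto
qed

lemma subdivide_at_edge_conditions:
  assumes wf: "wf_wmg S" and q: "q \<in> edges (subdivide_at S P)"
  shows "elen q > 0 \<and>
      (\<forall>x. x \<notin> {0..elen q} \<longrightarrow> epar q x = undefined) \<and>
      inj_on (epar q) {0..elen q} \<and>
      esrc q \<in> P \<and> etgt q \<in> P \<and> esrc q \<noteq> etgt q \<and>
      einterior q \<inter> P = {} \<and>
      erev q \<in> edges (subdivide_at S P) \<and>
      weight (subdivide_at S P) (erev q) = weight (subdivide_at S P) q \<and>
      weight (subdivide_at S P) q > 0"
proof -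
  from q obtain e a b where e: "e \<in> edges S" "consecutive P e a b" "q = piece e a b"
    by (rule subdivide_at_edgeE)
  have r: "0 \<le> a" "b \<le> elen e" "a < b" using consecutive_range[OF e(2)] by auto
  have ab: "a \<in> param_set P e" "b \<in> param_set P e" using e(2) unfolding consecutive_def by auto
  have inj: "inj_on (epar q) {0..elen q}"
  proof (rule inj_onI)
    fix x y assume "x \<in> {0..elen q}" "y \<in> {0..elen q}" "epar q x = epar q y"
    then show "x = y" using wf_epar_eqD[OF wf e(1), of "a+x" "a+y"] r e by (auto simp: piece_par)
  qed
  have ends: "esrc q = epar e a" "etgt q = epar e b"
    using e r by (simp_all add: esrc_def etgt_def piece_par)
  have interior: "einterior q \<inter> P = {}"
  proof -
    have "a + x \<notin> param_set P e" if "0 < x" "x < b - a" for x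
      using e(2) that unfolding consecutive_def by force
    then show ?thesis using e r unfolding einterior_def param_set_def by (auto simp: piece_par)
  qed
  have ce: "consecutive P (erev e) (elen e - b) (elen e - a)"
    using consecutive_erev[of e P] e(2) wf_elen_pos[OF wf e(1)] by simp
  have "erev q \<in> edges (subdivide_at S P)"
    using erev_piece[OF e(2)] subdivide_at_edgeI[OF wf_erev_edge[OF wf e(1)] ce] e(3) by simp
  moreover have "weight (subdivide_at S P) (erev q) = weight (subdivide_at S P) q"
    using erev_piece[OF e(2)] subdivide_at_weight[OF wf wf_erev_edge[OF wf e(1)] ce]
      subdivide_at_weight[OF wf e(1,2)] wf_weight_erev[OF wf e(1)] e(3) by simp
  moreover have "weight (subdivide_at S P) q > 0"
    using subdivide_at_weight[OF wf e(1,2)] wf_weight_pos[OF wf e(1)] e(3) by simp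
  moreover have "esrc q \<noteq> etgt q" using ends wf_epar_eqD[OF wf e(1), of a b] r by auto
  ultimately show ?thesis
    using inj ends interior ab e r unfolding param_set_def by (simp add: piece_undef)
qed

lemma subdivide_at_interiors_disjoint:
  assumes wf: "wf_wmg S"
    and q: "q1 \<in> edges (subdivide_at S P)" "q2 \<in> edges (subdivide_at S P)" "q2 \<noteq> q1" "q2 \<noteq> erev q1"
  shows "einterior q1 \<inter> einterior q2 = {}"
proof (rule ccontr)
  assume "einterior q1 \<inter> einterior q2 \<noteq> {}"
  then obtain x1 x2 where x: "0 < x1" "x1 < elen q1" "0 < x2" "x2 < elen q2" "epar q1 x1 = epar q2 x2"
    unfolding einterior_def by auto
  from q(1) obtain e1 a1 b1 where e1: "e1 \<in> edges S" "consecutive P e1 a1 b1" "q1 = piece e1 a1 b1"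
    by (rule subdivide_at_edgeE)
  from q(2) obtain e2 a2 b2 where e2: "e2 \<in> edges S" "consecutive P e2 a2 b2" "q2 = piece e2 a2 b2"
    by (rule subdivide_at_edgeE)
  have r1: "0 \<le> a1" "b1 \<le> elen e1" "a1 < b1" and r2: "0 \<le> a2" "b2 \<le> elen e2" "a2 < b2"
    using consecutive_range[OF e1(2)] consecutive_range[OF e2(2)] by auto
  have "epar e1 (a1 + x1) = epar e2 (a2 + x2)" using x e1 e2 by (simp add: piece_par)
  then have "(e2 = e1 \<and> a2 + x2 = a1 + x1) \<or> (e2 = erev e1 \<and> a2 + x2 = elen e1 - (a1 + x1))"
    using wf_interior_point_eq[OF wf e1(1) e2(1)] x r1 r2 e1 e2 by auto
  then show False
  proof
    assume h: "e2 = e1 \<and> a2 + x2 = a1 + x1"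
    then have "a1 = a2 \<and> b1 = b2"
      using consecutive_unique[OF e1(2), of a2 b2 "a1 + x1"] e2(2) x e1 e2 by auto
    then show False using h e1 e2 q(3) by simp
  next
    assume h: "e2 = erev e1 \<and> a2 + x2 = elen e1 - (a1 + x1)"
    have "consecutive P e1 (elen e1 - b2) (elen e1 - a2)"
      using e2(2) h consecutive_erev[of e1 P] wf_elen_pos[OF wf e1(1)] by simp
    then have "a1 = elen e1 - b2 \<and> b1 = elen e1 - a2"
      using consecutive_unique[OF e1(2), of _ _ "a1 + x1"] x e1 e2 h by auto
    then have "q2 = erev q1" using erev_piece[OF e1(2)] e1 e2 h by simp
    then show False using q(4) by simp
  qed
qed

lemma points_subdivide_at:
  assumes wf: "wf_wmg S" and P: "finite P" "verts S \<subseteq> P" "P \<subseteq> points S"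
  shows "points (subdivide_at S P) = points S"
proof
  show "points (subdivide_at S P) \<subseteq> points S"
  proof
    fix x assume "x \<in> points (subdivide_at S P)"
    then consider "x \<in> P" | q t where "q \<in> edges (subdivide_at S P)" "t \<in> {0..elen q}" "x = epar q t"
      unfolding points_def by (auto simp del: subdivide_at_simps(3))
    then show "x \<in> points S"
    proof cases
      case (2 q t)
      obtain e a b where e: "e \<in> edges S" "consecutive P e a b" "q = piece e a b"
        using 2(1) by (rule subdivide_at_edgeE)
      then show ?thesis
        using 2 epar_in_points[OF e(1), of "a + t"] consecutive_range[OF e(2)]
        by (auto simp: piece_par)
    qed (use P(3) in auto)
  qed
  show "points S \<subseteq> points (subdivide_at S P)"
  proof
    fix x assume x: "x \<in> points S"
    show "x \<in> points (subdivide_at S P)"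
    proof (cases "x \<in> P")
      case False
      then obtain e t where e: "e \<in> edges S" "0 < t" "t < elen e" "x = epar e t"
        using points_cases[OF wf x] P(2) by blast
      obtain a b where c: "consecutive P e a b" "a < t" "t < b"
        using consecutive_around[OF wf e(1) P(1,2) e(2,3)] False e(4) by blast
      have "x = epar (piece e a b) (t - a)" using e c by (simp add: piece_par)
      moreover have "t - a \<in> {0..elen (piece e a b)}" using c by simp
      ultimately show ?thesis using subdivide_at_edgeI[OF e(1) c(1)] unfolding points_def by blast
    qed (auto simp: points_def)
  qed
qed

lemma subdivision_subdivide_at:
  assumes wf: "wf_wmg S" and P: "finite P" "verts S \<subseteq> P" "P \<subseteq> points S"
  shows "subdivision (subdivide_at S P) S"
proof -
  have "wf_wmg (subdivide_at S P)"
    unfolding wf_wmg_def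
    using P(1) finite_edges_subdivide_at[OF wf P(1)] wf_bdry_verts[OF wf] P(2)
      subdivide_at_edge_conditions[OF wf] subdivide_at_interiors_disjoint[OF wf] by auto
  moreover have "\<exists>e\<in>edges S. \<exists>a. seg e a q \<and> weight (subdivide_at S P) q = weight S e"
    if "q \<in> edges (subdivide_at S P)" for q
    using that subdivide_at_weight[OF wf] piece_seg by (metis subdivide_at_edgeE)
  ultimately show ?thesis
    using points_subdivide_at[OF wf P] P(2) unfolding subdivision_def seg_def by auto
qed

section \<open>Refining a harmonic map\<close>

lemma maps_ontoD:
  "maps_onto \<phi> f g \<Longrightarrow> 0 \<le> x \<Longrightarrow> x \<le> elen f \<Longrightarrow> \<phi> (epar f x) = epar g (elen g / elen f * x)"
  unfolding maps_onto_def by auto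

definition local_degree :: "'p wmg \<Rightarrow> 'q wmg \<Rightarrow> ('p \<Rightarrow> 'q) \<Rightarrow> 'p \<Rightarrow> 'q edge \<Rightarrow> real" where
  "local_degree S' S \<phi> v' e = (\<Sum>e'\<in>{e'\<in>edges S'. esrc e' = v' \<and> maps_onto \<phi> e' e}.
     real (weight S' e') / real (weight S e) * (elen e / elen e'))"

lemma harmonic_at_iff:
  "harmonic_at S' S \<phi> v' \<longleftrightarrow> (\<exists>c. \<forall>e\<in>edges S. esrc e = \<phi> v' \<longrightarrow> local_degree S' S \<phi> v' e = c)"
  unfolding harmonic_at_def local_degree_def ..

lemma harmonic_at_no_edges:
  assumes "\<not> (\<exists>e'\<in>edges S'. esrc e' = v')"
  shows "harmonic_at S' S \<phi> v'"
proof -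
  have "{e'\<in>edges S'. esrc e' = v' \<and> maps_onto \<phi> e' e} = {}" for e using assms by blast
  then show ?thesis
    unfolding harmonic_at_def by (intro exI[of _ 0] ballI impI) (simp only: sum.empty)
qed

lemma maps_onto_erev:
  assumes m: "maps_onto \<phi> f g" and f: "elen f > 0" and g: "elen g \<ge> 0"
  shows "maps_onto \<phi> (erev f) (erev g)"
  unfolding maps_onto_def
proof
  fix x assume x: "x \<in> {0..elen (erev f)}"
  have "\<phi> (epar (erev f) x) = epar g (elen g / elen f * (elen f - x))"
    using maps_ontoD[OF m, of "elen f - x"] x by (auto simp: erev_par)
  also have "elen g / elen f * (elen f - x) = elen g - elen g / elen f * x"
    using f by (simp add: field_simps)
  also have "epar g (elen g - elen g / elen f * x) = epar (erev g) (elen g / elen f * x)"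
    using rescale_in_range[OF f g, of x] x by (simp add: erev_par)
  finally show "\<phi> (epar (erev f) x) = epar (erev g) (elen (erev g) / elen (erev f) * x)" by simp
qed

lemma maps_not_contracted:
  assumes wf: "wf_wmg S" and q: "q \<in> edges S" and p: "elen p > 0" and m: "maps_onto \<phi> p q"
  shows "\<not> contracted \<phi> p"
proof
  assume "contracted \<phi> p"
  then obtain v where v: "\<forall>x\<in>{0..elen p}. \<phi> (epar p x) = v" unfolding contracted_def by blast
  have "epar q 0 = v" "epar q (elen q) = v"
    using maps_ontoD[OF m, of 0] maps_ontoD[OF m, of "elen p"] v p by auto
  then show False using wf_esrc_ne_etgt[OF wf q] by (simp add: esrc_def etgt_def)
qed

lemma next_vert_on_edge:
  assumes wf: "wf_wmg X" and f: "f \<in> edges X" and V: "finite V" and fl: "epar f (elen f) \<in> V"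
    and a: "0 \<le> a" "a < elen f"
  obtains b where "a < b" "b \<le> elen f" "epar f b \<in> V" "\<And>s. a < s \<Longrightarrow> s < b \<Longrightarrow> epar f s \<notin> V"
proof -
  let ?Z = "{s\<in>{a<..elen f}. epar f s \<in> V}"
  have "inj_on (epar f) ?Z" using wf_epar_inj_on[OF wf f] by (rule inj_on_subset) (use a in auto)
  moreover have "epar f ` ?Z \<subseteq> V" by auto
  ultimately have fin: "finite ?Z" using V finite_imageD finite_subset by metis
  have "elen f \<in> ?Z" using fl a by auto
  then have min: "Min ?Z \<in> ?Z" using Min_in[OF fin] by blast
  moreover have "epar f s \<notin> V" if "a < s" "s < Min ?Z" for s
  proof
    assume "epar f s \<in> V"
    then have "s \<in> ?Z" using that min by auto
    then show False using Min_le[OF fin, of s] that by linarith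
  qed
  ultimately show ?thesis using that by auto
qed

lemma seg_offset_zero:
  assumes wf: "wf_wmg X" and f: "f \<in> edges X" and s: "seg f c p" and lp: "elen p > 0"
    and v: "esrc p \<in> verts X"
  shows "c = 0"
proof (rule ccontr)
  assume "c \<noteq> 0"
  then have "0 < c" "c < elen f" using seg_bounds[OF s] lp by auto
  moreover have "esrc p = epar f c" using segD[OF s, of 0] lp by (simp add: esrc_def)
  ultimately show False using wf_interior_notvert[OF wf f] v by simp
qed

locale refinement =
  fixes T' :: "'p wmg" and T :: "'q wmg" and B' :: "'p wmg" and B :: "'q wmg" and \<phi> :: "'p \<Rightarrow> 'q"
  assumes wfT': "wf_wmg T'" and wfT: "wf_wmg T"
    and B': "subdivision B' T'" and B: "subdivision B T"
    and pl: "pl_comb T' T \<phi>" and nc: "\<forall>f\<in>edges T'. \<not> contracted \<phi> f"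
    and img: "\<phi> ` verts B' \<subseteq> verts B"
    and pre: "\<forall>x\<in>points T'. \<phi> x \<in> verts B \<longrightarrow> x \<in> verts B'"
begin

lemma wfB': "wf_wmg B'" and wfB: "wf_wmg B"
  using B' B subdivision_wf by auto

lemma maps_onto_some: "f \<in> edges T' \<Longrightarrow> \<exists>g\<in>edges T. maps_onto \<phi> f g"
  using pl nc unfolding pl_comb_def by blast

lemma image_seg_edge:
  assumes p: "p \<in> edges B'" and f: "f \<in> edges T'" and s: "seg f c p"
    and g: "g \<in> edges T" and m: "maps_onto \<phi> f g"
  shows "\<exists>q\<in>edges B. maps_onto \<phi> p q \<and> seg g (elen g / elen f * c) q \<and> elen q = elen g / elen f * elen p"
proof -
  define k where "k = elen g / elen f"
  have lf: "elen f > 0" using wf_elen_pos[OF wfT' f] .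
  have lp: "elen p > 0" using wf_elen_pos[OF wfB' p] .
  have k: "k > 0" using lf wf_elen_pos[OF wfT g] k_def by simp
  have cs: "0 \<le> c" "c + elen p \<le> elen f" using seg_bounds[OF s] by auto
  have gk: "\<phi> (epar p x) = epar g (k * (c + x))" if "0 \<le> x" "x \<le> elen p" for x
    using maps_ontoD[OF m, of "c + x"] segD[OF s that] that cs k_def by simp
  have "\<exists>q\<in>edges B. elen q = k * (c + elen p) - k * c \<and> seg g (k * c) q"
  proof (rule subdivision_edge_between[OF wfT B g])
    show "0 \<le> k * c" "k * c < k * (c + elen p)" using k cs lp by simp_all
    have "k * (c + elen p) \<le> k * elen f" using k cs by (intro mult_left_mono) auto
    then show "k * (c + elen p) \<le> elen g" using lf k_def by simp
    show "epar g (k * c) \<in> verts B" "epar g (k * (c + elen p)) \<in> verts B"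
      using gk[of 0] gk[of "elen p"] lp img wf_esrc_vert[OF wfB' p] wf_etgt_vert[OF wfB' p]
      by (auto simp: esrc_def etgt_def)
  next
    fix s assume s: "k * c < s" "s < k * (c + elen p)"
    define y where "y = s / k - c"
    have y: "0 < y" "y < elen p" "s = k * (c + y)"
      using s k unfolding y_def by (auto simp: field_simps)
    have "epar p y \<in> points T'" using epar_in_points[OF p, of y] y subdivision_points[OF B'] by auto
    then show "epar g s \<notin> verts B"
      using gk[of y] y wf_interior_notvert[OF wfB' p y(1,2)] pre by auto
  qed
  then obtain q where q: "q \<in> edges B" "elen q = k * elen p" "seg g (k * c) q"
    by (auto simp: algebra_simps)
  have "maps_onto \<phi> p q"
    unfolding maps_onto_def
  proof
    fix x assume x: "x \<in> {0..elen p}"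
    have "\<phi> (epar p x) = epar g (k * (c + x))" using gk x by simp
    also have "\<dots> = epar q (k * x)" using segD[OF q(3), of "k * x"] x k q(2)
      by (auto simp: algebra_simps intro: mult_left_mono)
    finally show "\<phi> (epar p x) = epar q (elen q / elen p * x)" using q(2) lp by simp
  qed
  then show ?thesis using q k_def by auto
qed

lemma image_seg_edge_unique:
  assumes p: "p \<in> edges B'" and f: "f \<in> edges T'" and s: "seg f c p"
    and g: "g \<in> edges T" and m: "maps_onto \<phi> f g" and q: "q \<in> edges B" and mq: "maps_onto \<phi> p q"
  shows "seg g (elen g / elen f * c) q \<and> elen q = elen g / elen f * elen p"
proof -
  obtain q' where q': "q' \<in> edges B" "maps_onto \<phi> p q'" "seg g (elen g / elen f * c) q'"
    "elen q' = elen g / elen f * elen p" using image_seg_edge[OF p f s g m] by blast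
  have "q = q'" using maps_onto_unique[OF wfB q'(1) q wf_elen_pos[OF wfB' p] q'(2) mq] .
  then show ?thesis using q' by simp
qed

lemma fine_edge_maps_onto: "p \<in> edges B' \<Longrightarrow> \<exists>q\<in>edges B. maps_onto \<phi> p q"
  using subdivisionD[OF B'] maps_onto_some image_seg_edge by metis

lemma not_contracted_fine: "\<forall>p\<in>edges B'. \<not> contracted \<phi> p"
  using fine_edge_maps_onto maps_not_contracted[OF wfB] wf_elen_pos[OF wfB'] by blast

lemma pl_comb_fine: "pl_comb B' B \<phi>"
  unfolding pl_comb_def
proof (intro conjI ballI impI)
  show "\<phi> ` points B' \<subseteq> points B"
    using pl subdivision_points[OF B'] subdivision_points[OF B] unfolding pl_comb_def by auto
  show "\<phi> ` verts B' \<subseteq> verts B" using img .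
  show "contracted \<phi> p \<or> (\<exists>q\<in>edges B. maps_onto \<phi> p q)" if "p \<in> edges B'" for p
    using fine_edge_maps_onto[OF that] by blast
next
  fix v' assume "v' \<in> verts B'" and h: "\<phi> v' \<in> bdry B \<and> (\<exists>p\<in>edges B'. esrc p = v' \<and> \<not> contracted \<phi> p)"
  then obtain p where p: "p \<in> edges B'" "esrc p = v'" by blast
  obtain f c where f: "f \<in> edges T'" "seg f c p" using subdivisionD[OF B' p(1)] by blast
  obtain g where g: "g \<in> edges T" "maps_onto \<phi> f g" using maps_onto_some[OF f(1)] by blast
  have lp: "elen p > 0" using wf_elen_pos[OF wfB' p(1)] .
  have vf: "v' = epar f c" using p(2) segD[OF f(2), of 0] lp by (simp add: esrc_def)
  have bT: "\<phi> v' \<in> bdry T" using h subdivision_bdry[OF B] by simp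
  show "v' \<in> bdry B'"
  proof (cases "c = 0")
    case True
    then have "esrc f = v'" using vf by (simp add: esrc_def)
    then have "v' \<in> bdry T'"
      using pl f(1) nc bT wf_esrc_vert[OF wfT' f(1)] unfolding pl_comb_def by blast
    then show ?thesis using subdivision_bdry[OF B'] by simp
  next
    case False
    then have c: "0 < c" "c < elen f" using seg_bounds[OF f(2)] lp by auto
    have "\<phi> v' = epar g (elen g / elen f * c)" using maps_ontoD[OF g(2), of c] vf c by simp
    moreover have "0 < elen g / elen f * c" "elen g / elen f * c < elen g"
      using c wf_elen_pos[OF wfT' f(1)] wf_elen_pos[OF wfT g(1)] by (auto simp: field_simps)
    ultimately have "\<phi> v' \<notin> verts T" using wf_interior_notvert[OF wfT g(1)] by simp
    then show ?thesis using bT wf_bdry_verts[OF wfT] by auto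
  qed
qed

definition parent_edge :: "'p edge \<Rightarrow> 'p edge" where
  "parent_edge p = (THE f. f \<in> edges T' \<and> seg f 0 p)"

definition first_piece :: "'p edge \<Rightarrow> 'p edge" where
  "first_piece f = (THE p. p \<in> edges B' \<and> seg f 0 p)"

lemma parent_edge_seg:
  assumes p: "p \<in> edges B'" and v: "esrc p \<in> verts T'"
  shows "parent_edge p \<in> edges T' \<and> seg (parent_edge p) 0 p"
proof -
  obtain f c where f: "f \<in> edges T'" "seg f c p" using subdivisionD[OF B' p] by blast
  have lp: "elen p > 0" using wf_elen_pos[OF wfB' p] .
  have f0: "f \<in> edges T' \<and> seg f 0 p" using f seg_offset_zero[OF wfT' f lp v] by simp
  have "parent_edge p = f"
    unfolding parent_edge_def
  proof (rule the_equality)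
    show "f \<in> edges T' \<and> seg f 0 p" using f0 .
    show "f' = f" if "f' \<in> edges T' \<and> seg f' 0 p" for f'
      using seg_parent_unique[OF wfT' f(1) _ _ _ lp] f0 that by blast
  qed
  then show ?thesis using f0 by simp
qed

lemma first_piece_seg:
  assumes f: "f \<in> edges T'"
  shows "first_piece f \<in> edges B' \<and> seg f 0 (first_piece f)"
proof -
  have lf: "elen f > 0" using wf_elen_pos[OF wfT' f] .
  have vB': "verts T' \<subseteq> verts B'" using subdivision_verts[OF B'] .
  have "epar f (elen f) \<in> verts B'" "epar f 0 \<in> verts B'"
    using wf_etgt_vert[OF wfT' f] wf_esrc_vert[OF wfT' f] vB' by (auto simp: etgt_def esrc_def)
  moreover obtain b where "0 < b" "b \<le> elen f" "epar f b \<in> verts B'"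
    "\<And>s. 0 < s \<Longrightarrow> s < b \<Longrightarrow> epar f s \<notin> verts B'"
    using next_vert_on_edge[OF wfT' f wf_finite_verts[OF wfB'], of 0] calculation lf by auto
  ultimately obtain p where p: "p \<in> edges B'" "seg f 0 p"
    using subdivision_edge_between[OF wfT' B' f, of 0 b] by auto
  have "first_piece f = p"
    unfolding first_piece_def
  proof (rule the_equality)
    show "p \<in> edges B' \<and> seg f 0 p" using p by simp
    show "p' = p" if "p' \<in> edges B' \<and> seg f 0 p'" for p'
      using seg_offset_unique[OF wfB' p(1)] p that by blast
  qed
  then show ?thesis using p by simp
qed

lemma first_piece_bij:
  assumes v': "v' \<in> verts T'" and g: "g \<in> edges T" and q: "q \<in> edges B" and sq: "seg g 0 q"
  shows "bij_betw first_piece {f\<in>edges T'. esrc f = v' \<and> maps_onto \<phi> f g}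
           {p\<in>edges B'. esrc p = v' \<and> maps_onto \<phi> p q}"
proof (rule bij_betw_byWitness[where f' = parent_edge])
  have lq: "elen q > 0" using wf_elen_pos[OF wfB q] .
  have src: "esrc p = v'" if "seg f 0 p" "esrc f = v'" "p \<in> edges B'" for f p
    using segD[OF that(1), of 0] that(2) wf_elen_pos[OF wfB' that(3)] by (simp add: esrc_def)
  show "\<forall>f\<in>{f\<in>edges T'. esrc f = v' \<and> maps_onto \<phi> f g}. parent_edge (first_piece f) = f"
  proof
    fix f assume f: "f \<in> {f\<in>edges T'. esrc f = v' \<and> maps_onto \<phi> f g}"
    have p: "first_piece f \<in> edges B'" "seg f 0 (first_piece f)" using first_piece_seg f by auto
    then have "esrc (first_piece f) \<in> verts T'" using src f v' by auto
    then have "parent_edge (first_piece f) \<in> edges T' \<and> seg (parent_edge (first_piece f)) 0 (first_piece f)"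
      using parent_edge_seg p(1) by blast
    then show "parent_edge (first_piece f) = f"
      using seg_parent_unique[OF wfT' _ _ p(2) _ wf_elen_pos[OF wfB' p(1)]] f by blast
  qed
  show "\<forall>p\<in>{p\<in>edges B'. esrc p = v' \<and> maps_onto \<phi> p q}. first_piece (parent_edge p) = p"
  proof
    fix p assume p: "p \<in> {p\<in>edges B'. esrc p = v' \<and> maps_onto \<phi> p q}"
    then have f: "parent_edge p \<in> edges T'" "seg (parent_edge p) 0 p"
      using parent_edge_seg v' by auto
    then show "first_piece (parent_edge p) = p"
      using first_piece_seg[OF f(1)] seg_offset_unique[OF wfB'] p by blast
  qed
  show "first_piece ` {f\<in>edges T'. esrc f = v' \<and> maps_onto \<phi> f g}
      \<subseteq> {p\<in>edges B'. esrc p = v' \<and> maps_onto \<phi> p q}"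
  proof (rule image_subsetI)
    fix f assume "f \<in> {f\<in>edges T'. esrc f = v' \<and> maps_onto \<phi> f g}"
    then have f: "f \<in> edges T'" "esrc f = v'" "maps_onto \<phi> f g" by auto
    have p: "first_piece f \<in> edges B'" "seg f 0 (first_piece f)"
      using first_piece_seg[OF f(1)] by auto
    obtain q' where q': "q' \<in> edges B" "maps_onto \<phi> (first_piece f) q'" "seg g 0 q'"
      using image_seg_edge[OF p(1) f(1) p(2) g f(3)] by auto
    then show "first_piece f \<in> {p\<in>edges B'. esrc p = v' \<and> maps_onto \<phi> p q}"
      using seg_offset_unique[OF wfB q q'(1) sq] p src f by auto
  qed
  show "parent_edge ` {p\<in>edges B'. esrc p = v' \<and> maps_onto \<phi> p q}
      \<subseteq> {f\<in>edges T'. esrc f = v' \<and> maps_onto \<phi> f g}"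
  proof (rule image_subsetI)
    fix p assume "p \<in> {p\<in>edges B'. esrc p = v' \<and> maps_onto \<phi> p q}"
    then have p: "p \<in> edges B'" "esrc p = v'" "maps_onto \<phi> p q" by auto
    have f: "parent_edge p \<in> edges T'" "seg (parent_edge p) 0 p" using parent_edge_seg p v' by auto
    obtain g' where g': "g' \<in> edges T" "maps_onto \<phi> (parent_edge p) g'"
      using maps_onto_some[OF f(1)] by blast
    have "seg g' 0 q" using image_seg_edge_unique[OF p(1) f g' q p(3)] by simp
    then have "g' = g" using seg_parent_unique[OF wfT g g'(1) sq _ lq] by simp
    moreover have "esrc (parent_edge p) = v'"
      using segD[OF f(2), of 0] p(2) wf_elen_pos[OF wfB' p(1)] by (simp add: esrc_def)
    ultimately show "parent_edge p \<in> {f\<in>edges T'. esrc f = v' \<and> maps_onto \<phi> f g}"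
      using f g' by auto
  qed
qed

lemma local_degree_fine_vert:
  assumes v': "v' \<in> verts T'" and q: "q \<in> edges B" "esrc q = \<phi> v'"
  shows "\<exists>g\<in>edges T. esrc g = \<phi> v' \<and> local_degree B' B \<phi> v' q = local_degree T' T \<phi> v' g"
proof -
  obtain g d where g: "g \<in> edges T" "seg g d q" using subdivisionD[OF B q(1)] by blast
  have lq: "elen q > 0" using wf_elen_pos[OF wfB q(1)] .
  have "\<phi> v' \<in> verts T" using pl v' unfolding pl_comb_def by auto
  then have sq: "seg g 0 q" using seg_offset_zero[OF wfT g(1,2) lq] g(2) q(2) by simp
  have gs: "esrc g = \<phi> v'" using segD[OF sq, of 0] q(2) lq by (simp add: esrc_def)
  have wq: "weight B q = weight T g" using subdivision_seg_weight[OF wfT B g(1) q(1) sq] .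
  have summand: "real (weight B' (first_piece f)) / real (weight B q) * (elen q / elen (first_piece f))
      = real (weight T' f) / real (weight T g) * (elen g / elen f)"
    if f: "f \<in> {f\<in>edges T'. esrc f = v' \<and> maps_onto \<phi> f g}" for f
  proof -
    have p: "first_piece f \<in> edges B'" "seg f 0 (first_piece f)" using first_piece_seg f by auto
    have "maps_onto \<phi> (first_piece f) q"
      using bij_betwE[OF first_piece_bij[OF v' g(1) q(1) sq]] f by blast
    then have "elen q = elen g / elen f * elen (first_piece f)"
      using image_seg_edge_unique[OF p(1) _ p(2) g(1) _ q(1)] f by auto
    then show ?thesis
      using subdivision_seg_weight[OF wfT' B' _ p(1) p(2)] wq wf_elen_pos[OF wfB' p(1)] f by auto
  qed
  have "local_degree B' B \<phi> v' q = local_degree T' T \<phi> v' g"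
    unfolding local_degree_def
    using sum.reindex_bij_betw[OF first_piece_bij[OF v' g(1) q(1) sq]] summand
    by (metis (no_types, lifting) sum.cong)
  then show ?thesis using g(1) gs by blast
qed

lemma harmonic_at_fine_vert:
  assumes v': "v' \<in> verts T'" and harm: "harmonic_at T' T \<phi> v'"
  shows "harmonic_at B' B \<phi> v'"
proof -
  obtain c0 where c0: "\<forall>g\<in>edges T. esrc g = \<phi> v' \<longrightarrow> local_degree T' T \<phi> v' g = c0"
    using harm unfolding harmonic_at_iff by blast
  have "local_degree B' B \<phi> v' q = c0" if "q \<in> edges B" "esrc q = \<phi> v'" for q
    using local_degree_fine_vert[OF v' that] c0 by auto
  then show ?thesis unfolding harmonic_at_iff by blast
qed

text \<open>At a vertex \<open>v' = epar f0 t0\<close> of \<open>B'\<close> inside an edge \<open>f0\<close> of \<open>T'\<close>, the map is locally an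
  isometry up to the factor \<open>elen g0 / elen f0\<close>: there are exactly two directions
  \<open>(f, c, g)\<close>, with \<open>v' = epar f c\<close> and \<open>f\<close> mapping onto \<open>g\<close>.\<close>

context
  fixes f0 t0 g0
  assumes f0: "f0 \<in> edges T'" "0 < t0" "t0 < elen f0" and g0: "g0 \<in> edges T" "maps_onto \<phi> f0 g0"
begin

lemma interior_direction:
  assumes "(f, c, g) \<in> {(f0, t0, g0), (erev f0, elen f0 - t0, erev g0)}"
  shows "f \<in> edges T' \<and> g \<in> edges T \<and> maps_onto \<phi> f g \<and> 0 < c \<and> c < elen f \<and> epar f c = epar f0 t0
    \<and> elen g / elen f = elen g0 / elen f0 \<and> weight T' f = weight T' f0 \<and> weight T g = weight T g0"
proof -
  from assms consider "f = f0" "c = t0" "g = g0" | "f = erev f0" "c = elen f0 - t0" "g = erev g0"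
    by blast
  then show ?thesis
  proof cases
    case 1
    then show ?thesis using f0 g0 by simp
  next
    case 2
    then show ?thesis
      using f0 wf_erev_edge[OF wfT' f0(1)] wf_erev_edge[OF wfT g0(1)]
        maps_onto_erev[OF g0(2) wf_elen_pos[OF wfT' f0(1)]] wf_elen_pos[OF wfT g0(1)]
        wf_weight_erev[OF wfT' f0(1)] wf_weight_erev[OF wfT g0(1)] by (simp add: erev_par)
  qed
qed

lemma interior_edge_direction:
  assumes p: "p \<in> edges B'" "esrc p = epar f0 t0"
  obtains f c g where "(f, c, g) \<in> {(f0, t0, g0), (erev f0, elen f0 - t0, erev g0)}" "seg f c p"
proof -
  obtain f c where f: "f \<in> edges T'" "seg f c p" using subdivisionD[OF B' p(1)] by blast
  have lp: "elen p > 0" using wf_elen_pos[OF wfB' p(1)] .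
  have vf: "epar f0 t0 = epar f c" using p(2) segD[OF f(2), of 0] lp by (simp add: esrc_def)
  have "c \<noteq> 0"
    using vf wf_interior_notvert[OF wfT' f0] wf_esrc_vert[OF wfT' f(1)] by (auto simp: esrc_def)
  then have "0 < c" "c < elen f" using seg_bounds[OF f(2)] lp by auto
  then have "(f = f0 \<and> c = t0) \<or> (f = erev f0 \<and> c = elen f0 - t0)"
    using wf_interior_point_eq[OF wfT' f0(1) f(1) f0(2,3)] vf by simp
  then show ?thesis using that f(2) by blast
qed

lemma interior_edge_image:
  assumes d: "(f, c, g) \<in> {(f0, t0, g0), (erev f0, elen f0 - t0, erev g0)}"
    and p: "p \<in> edges B'" "seg f c p" and q: "q \<in> edges B" "maps_onto \<phi> p q"
  shows "seg g (elen g0 / elen f0 * c) q" "elen q / elen p = elen g0 / elen f0"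
proof -
  note fg = interior_direction[OF d]
  have r: "elen g / elen f = elen g0 / elen f0" using fg by blast
  have "seg g (elen g / elen f * c) q \<and> elen q = elen g / elen f * elen p"
    using image_seg_edge_unique[OF p(1) _ p(2) _ _ q] fg by blast
  then show "seg g (elen g0 / elen f0 * c) q" "elen q / elen p = elen g0 / elen f0"
    using r wf_elen_pos[OF wfB' p(1)] by auto
qed

lemma interior_edge_term:
  assumes p: "p \<in> edges B'" "esrc p = epar f0 t0" and q: "q \<in> edges B" "maps_onto \<phi> p q"
  shows "real (weight B' p) / real (weight B q) * (elen q / elen p)
    = real (weight T' f0) / real (weight T g0) * (elen g0 / elen f0)"
proof -
  obtain f c g where d: "(f, c, g) \<in> {(f0, t0, g0), (erev f0, elen f0 - t0, erev g0)}" "seg f c p"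
    using interior_edge_direction[OF p] by blast
  note fg = interior_direction[OF d(1)]
  have "weight B' p = weight T' f" using subdivision_seg_weight[OF wfT' B' _ p(1) d(2)] fg by simp
  moreover have "weight B q = weight T g"
    using subdivision_seg_weight[OF wfT B _ q(1) interior_edge_image(1)[OF d(1) p(1) d(2) q]] fg
    by simp
  ultimately show ?thesis using interior_edge_image(2)[OF d(1) p(1) d(2) q] fg by simp
qed

lemma interior_edge_unique:
  assumes p1: "p1 \<in> edges B'" "esrc p1 = epar f0 t0" "maps_onto \<phi> p1 q"
    and p2: "p2 \<in> edges B'" "esrc p2 = epar f0 t0" "maps_onto \<phi> p2 q" and q: "q \<in> edges B"
  shows "p2 = p1"
proof -
  obtain f1 c1 g1 where d1: "(f1, c1, g1) \<in> {(f0, t0, g0), (erev f0, elen f0 - t0, erev g0)}" "seg f1 c1 p1"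
    using interior_edge_direction[OF p1(1,2)] by blast
  obtain f2 c2 g2 where d2: "(f2, c2, g2) \<in> {(f0, t0, g0), (erev f0, elen f0 - t0, erev g0)}" "seg f2 c2 p2"
    using interior_edge_direction[OF p2(1,2)] by blast
  have "g2 = g1"
    using seg_parent_unique[OF wfT _ _ interior_edge_image(1)[OF d1(1) p1(1) d1(2) q p1(3)]
        interior_edge_image(1)[OF d2(1) p2(1) d2(2) q p2(3)] wf_elen_pos[OF wfB q]]
      interior_direction[OF d1(1)] interior_direction[OF d2(1)] by blast
  then have "f2 = f1 \<and> c2 = c1" using d1(1) d2(1) wf_erev_neq[OF wfT g0(1)] by auto
  then show ?thesis using seg_offset_unique[OF wfB' p1(1) p2(1) d1(2)] d2(2) by simp
qed

lemma interior_edge_exists: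
  assumes v': "epar f0 t0 \<in> verts B'" and q: "q \<in> edges B" "esrc q = \<phi> (epar f0 t0)"
  shows "\<exists>p\<in>edges B'. esrc p = epar f0 t0 \<and> maps_onto \<phi> p q"
proof -
  obtain g' d where g': "g' \<in> edges T" "seg g' d q" using subdivisionD[OF B q(1)] by blast
  have lq: "elen q > 0" using wf_elen_pos[OF wfB q(1)] .
  define k where "k = elen g0 / elen f0"
  have k: "0 < k * t0" "k * t0 < elen g0"
    using f0 wf_elen_pos[OF wfT' f0(1)] wf_elen_pos[OF wfT g0(1)] unfolding k_def
    by (auto simp: field_simps)
  have vg0: "\<phi> (epar f0 t0) = epar g0 (k * t0)" using maps_ontoD[OF g0(2), of t0] f0 k_def by simp
  have vq: "\<phi> (epar f0 t0) = epar g' d" using q(2) segD[OF g'(2), of 0] lq by (simp add: esrc_def)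
  have "d \<noteq> 0" using vg0 vq wf_interior_notvert[OF wfT g0(1) k] wf_esrc_vert[OF wfT g'(1)]
    by (auto simp: esrc_def)
  then have "0 < d" "d < elen g'" using seg_bounds[OF g'(2)] lq by auto
  then have "(g' = g0 \<and> d = k * t0) \<or> (g' = erev g0 \<and> d = elen g0 - k * t0)"
    using wf_interior_point_eq[OF wfT g0(1) g'(1) k] vq vg0 by simp
  then obtain f c where d: "(f, c, g') \<in> {(f0, t0, g0), (erev f0, elen f0 - t0, erev g0)}" and dk: "d = k * c"
  proof (elim disjE conjE)
    assume "g' = g0" "d = k * t0"
    then show thesis using that[of f0 t0] by simp
  next
    assume "g' = erev g0" "d = elen g0 - k * t0"
    moreover have "elen g0 - k * t0 = k * (elen f0 - t0)"
      using wf_elen_pos[OF wfT' f0(1)] k_def by (simp add: field_simps)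
    ultimately show thesis using that[of "erev f0" "elen f0 - t0"] by simp
  qed
  note fg = interior_direction[OF d]
  have fT: "f \<in> edges T'" and cf: "0 < c" "c < elen f" and vfc: "epar f c = epar f0 t0"
    using fg by auto
  have fl: "epar f (elen f) \<in> verts B'"
    using wf_etgt_vert[OF wfT' fT] subdivision_verts[OF B'] by (auto simp: etgt_def)
  obtain b where b: "c < b" "b \<le> elen f" "epar f b \<in> verts B'"
    "\<And>s. c < s \<Longrightarrow> s < b \<Longrightarrow> epar f s \<notin> verts B'"
    using next_vert_on_edge[OF wfT' fT wf_finite_verts[OF wfB'] fl, of c] cf by auto
  obtain p where p: "p \<in> edges B'" "seg f c p"
    using subdivision_edge_between[OF wfT' B' fT, of c b] b cf vfc v' by auto
  have ps: "esrc p = epar f0 t0"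
    using segD[OF p(2), of 0] wf_elen_pos[OF wfB' p(1)] fg by (simp add: esrc_def)
  obtain q' where q': "q' \<in> edges B" "maps_onto \<phi> p q'" using fine_edge_maps_onto[OF p(1)] by blast
  have "q' = q"
    using seg_offset_unique[OF wfB q(1) q'(1) g'(2)] interior_edge_image(1)[OF d p q'] dk k_def
    by simp
  then show ?thesis using p(1) ps q' by auto
qed

end

lemma harmonic_at_fine_interior:
  assumes v': "v' \<in> verts B'" "v' \<notin> verts T'"
  shows "harmonic_at B' B \<phi> v'"
proof -
  have "v' \<in> points T'" using v' verts_subset_points[of B'] subdivision_points[OF B'] by auto
  then obtain f0 t0 where f0: "f0 \<in> edges T'" "0 < t0" "t0 < elen f0" "v' = epar f0 t0"
    using points_cases[OF wfT'] v'(2) by blast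
  obtain g0 where g0: "g0 \<in> edges T" "maps_onto \<phi> f0 g0" using maps_onto_some[OF f0(1)] by blast
  have "local_degree B' B \<phi> v' q = real (weight T' f0) / real (weight T g0) * (elen g0 / elen f0)"
    if q: "q \<in> edges B" "esrc q = \<phi> v'" for q
  proof -
    obtain p where p: "p \<in> edges B'" "esrc p = v'" "maps_onto \<phi> p q"
      using interior_edge_exists[OF f0(1-3) g0 _ q(1)] q(2) f0(4) v'(1) by auto
    have "p2 = p" if "p2 \<in> {p\<in>edges B'. esrc p = v' \<and> maps_onto \<phi> p q}" for p2
      using interior_edge_unique[OF f0(1-3) g0 p(1) _ p(3) _ _ _ q(1)] that p(2) f0(4) by auto
    then have "{p\<in>edges B'. esrc p = v' \<and> maps_onto \<phi> p q} = {p}" using p by blast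
    then show ?thesis
      unfolding local_degree_def using interior_edge_term[OF f0(1-3) g0 p(1) _ q(1) p(3)] p(2) f0(4)
      by simp
  qed
  then show ?thesis unfolding harmonic_at_iff by blast
qed

lemma harmonic_at_fine:
  assumes "\<forall>v'\<in>verts T' - bdry T'. harmonic_at T' T \<phi> v'"
  shows "\<forall>v'\<in>verts B' - bdry B'. harmonic_at B' B \<phi> v'"
proof
  fix v' assume v': "v' \<in> verts B' - bdry B'"
  show "harmonic_at B' B \<phi> v'"
  proof (cases "v' \<in> verts T'")
    case True
    then show ?thesis using harmonic_at_fine_vert assms v' subdivision_bdry[OF B'] by simp
  qed (use harmonic_at_fine_interior v' in auto)
qed

end

section \<open>Factoring harmonic maps\<close>

text \<open>With \<open>\<pi>2 = h \<circ> \<pi>1\<close>, the local degree of \<open>\<pi>2\<close> at \<open>a\<close> is that of \<open>h\<close> at \<open>\<pi>1 a\<close> times that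
  of \<open>\<pi>1\<close> at \<open>a\<close>, so \<open>h\<close> inherits harmonicity.\<close>

locale harmonic_factorisation =
  fixes A :: "'p wmg" and C1 :: "'q wmg" and C2 :: "'r wmg"
    and \<pi>1 :: "'p \<Rightarrow> 'q" and \<pi>2 :: "'p \<Rightarrow> 'r" and h :: "'q \<Rightarrow> 'r"
  assumes wfA: "wf_wmg A" and wf1: "wf_wmg C1" and wf2: "wf_wmg C2"
    and pl1: "pl_comb A C1 \<pi>1" and pl2: "pl_comb A C2 \<pi>2"
    and nc1: "\<forall>p\<in>edges A. \<not> contracted \<pi>1 p" and nc2: "\<forall>p\<in>edges A. \<not> contracted \<pi>2 p"
    and harm1: "\<forall>v\<in>verts A - bdry A. harmonic_at A C1 \<pi>1 v"
    and harm2: "\<forall>v\<in>verts A - bdry A. harmonic_at A C2 \<pi>2 v"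
    and surj: "\<pi>1 ` points A = points C1"
    and factor: "\<forall>x\<in>points A. h (\<pi>1 x) = \<pi>2 x"
    and verts1: "\<pi>1 ` verts A = verts C1"
    and bdry1: "\<forall>x\<in>points A. \<pi>1 x \<in> bdry C1 \<longleftrightarrow> x \<in> bdry A"
    and bdry2: "\<forall>x\<in>points A. \<pi>2 x \<in> bdry C2 \<longleftrightarrow> x \<in> bdry A"
begin

lemma maps_onto_C1: "p \<in> edges A \<Longrightarrow> \<exists>q\<in>edges C1. maps_onto \<pi>1 p q"
  using pl1 nc1 unfolding pl_comb_def by blast

lemma maps_onto_C2: "p \<in> edges A \<Longrightarrow> \<exists>q\<in>edges C2. maps_onto \<pi>2 p q"
  using pl2 nc2 unfolding pl_comb_def by blast

lemma edge_lift:
  assumes e1: "e1 \<in> edges C1"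
  shows "\<exists>p\<in>edges A. maps_onto \<pi>1 p e1"
proof -
  have l1: "elen e1 > 0" using wf_elen_pos[OF wf1 e1] .
  define y where "y = epar e1 (elen e1 / 2)"
  have "y \<in> points C1" using epar_in_points[OF e1, of "elen e1 / 2"] l1 y_def by auto
  then obtain x where x: "x \<in> points A" "\<pi>1 x = y" using surj by (metis imageE)
  have "y \<notin> verts C1" using wf_interior_notvert[OF wf1 e1, of "elen e1 / 2"] l1 y_def by auto
  then have "x \<notin> verts A" using x verts1 by auto
  then obtain p t where p: "p \<in> edges A" "0 < t" "t < elen p" "x = epar p t"
    using points_cases[OF wfA x(1)] by blast
  obtain q where q: "q \<in> edges C1" "maps_onto \<pi>1 p q" using maps_onto_C1[OF p(1)] by blast
  have lp: "elen p > 0" and lq: "elen q > 0"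
    using wf_elen_pos[OF wfA p(1)] wf_elen_pos[OF wf1 q(1)] .
  have "0 < elen q / elen p * t" "elen q / elen p * t < elen q"
    using p lp lq by (auto simp: field_simps)
  moreover have "epar e1 (elen e1 / 2) = epar q (elen q / elen p * t)"
    using maps_ontoD[OF q(2), of t] p x y_def by simp
  ultimately have "q = e1 \<or> q = erev e1"
    using wf_interior_point_eq[OF wf1 e1 q(1), of "elen e1 / 2"] l1 by auto
  then show ?thesis
  proof
    assume "q = erev e1"
    then have "maps_onto \<pi>1 (erev p) e1"
      using maps_onto_erev[OF q(2) lp] lq wf_erev_erev[OF wf1 e1] by simp
    then show ?thesis using wf_erev_edge[OF wfA p(1)] by blast
  qed (use q p in blast)
qed

lemma maps_onto_factor:
  assumes p: "p \<in> edges A" and e1: "e1 \<in> edges C1"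
    and m1: "maps_onto \<pi>1 p e1" and m2: "maps_onto \<pi>2 p e2"
  shows "maps_onto h e1 e2"
  unfolding maps_onto_def
proof
  fix x assume x: "x \<in> {0..elen e1}"
  have lp: "elen p > 0" and l1: "elen e1 > 0" using wf_elen_pos[OF wfA p] wf_elen_pos[OF wf1 e1] .
  define s where "s = elen p / elen e1 * x"
  have s: "0 \<le> s" "s \<le> elen p" using rescale_in_range[OF l1 _ x, of "elen p"] lp s_def by auto
  have "epar e1 x = \<pi>1 (epar p s)" using maps_ontoD[OF m1 s] lp l1 s_def by simp
  then have "h (epar e1 x) = \<pi>2 (epar p s)" using factor epar_in_points[OF p, of s] s by simp
  also have "\<dots> = epar e2 (elen e2 / elen e1 * x)" using maps_ontoD[OF m2 s] lp l1 s_def by simp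
  finally show "h (epar e1 x) = epar e2 (elen e2 / elen e1 * x)" .
qed

lemma pl_comb_factor: "pl_comb C1 C2 h"
  unfolding pl_comb_def
proof (intro conjI ballI impI)
  have pts2: "\<pi>2 ` points A \<subseteq> points C2" and verts2: "\<pi>2 ` verts A \<subseteq> verts C2"
    using pl2 unfolding pl_comb_def by blast+
  show "h ` points C1 \<subseteq> points C2"
  proof
    fix z assume "z \<in> h ` points C1"
    then obtain x where "x \<in> points A" "z = h (\<pi>1 x)" by (metis surj imageE)
    then show "z \<in> points C2" using factor pts2 by auto
  qed
  show "h ` verts C1 \<subseteq> verts C2"
  proof
    fix z assume "z \<in> h ` verts C1"
    then obtain x where "x \<in> verts A" "z = h (\<pi>1 x)" by (metis verts1 imageE)
    then show "z \<in> verts C2" using factor verts2 verts_subset_points[of A] by auto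
  qed
next
  fix e1 assume e1: "e1 \<in> edges C1"
  obtain p where p: "p \<in> edges A" "maps_onto \<pi>1 p e1" using edge_lift[OF e1] by blast
  obtain e2 where e2: "e2 \<in> edges C2" "maps_onto \<pi>2 p e2" using maps_onto_C2[OF p(1)] by blast
  show "contracted h e1 \<or> (\<exists>e\<in>edges C2. maps_onto h e1 e)"
    using maps_onto_factor[OF p(1) e1 p(2) e2(2)] e2(1) by blast
next
  fix v assume v: "v \<in> verts C1" and b: "h v \<in> bdry C2 \<and> (\<exists>e'\<in>edges C1. esrc e' = v \<and> \<not> contracted h e')"
  obtain a where a: "a \<in> verts A" "v = \<pi>1 a" using v verts1 by (metis imageE)
  then have aP: "a \<in> points A" using verts_subset_points[of A] by blast
  then have "\<pi>2 a \<in> bdry C2" using b a(2) factor by simp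
  then show "v \<in> bdry C1" using aP a(2) bdry1 bdry2 by simp
qed

lemma maps_onto_C2_decompose:
  assumes e2: "e2 \<in> edges C2"
  shows "{p\<in>edges A. esrc p = a \<and> maps_onto \<pi>2 p e2}
    = (\<Union>e1\<in>{e1\<in>edges C1. esrc e1 = \<pi>1 a \<and> maps_onto h e1 e2}. {p\<in>edges A. esrc p = a \<and> maps_onto \<pi>1 p e1})"
proof (intro equalityI subsetI)
  fix p assume p: "p \<in> {p\<in>edges A. esrc p = a \<and> maps_onto \<pi>2 p e2}"
  obtain e1 where e1: "e1 \<in> edges C1" "maps_onto \<pi>1 p e1" using maps_onto_C1 p by blast
  have "esrc e1 = \<pi>1 a"
    using maps_ontoD[OF e1(2), of 0] wf_elen_pos[OF wfA, of p] p by (auto simp: esrc_def)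
  then show "p \<in> (\<Union>e1\<in>{e1\<in>edges C1. esrc e1 = \<pi>1 a \<and> maps_onto h e1 e2}. {p\<in>edges A. esrc p = a \<and> maps_onto \<pi>1 p e1})"
    using maps_onto_factor[of p e1 e2] e1 p by (intro UN_I[of e1]) auto
next
  fix p assume "p \<in> (\<Union>e1\<in>{e1\<in>edges C1. esrc e1 = \<pi>1 a \<and> maps_onto h e1 e2}. {p\<in>edges A. esrc p = a \<and> maps_onto \<pi>1 p e1})"
  then obtain e1 where e1: "e1 \<in> edges C1" "maps_onto h e1 e2"
    and p: "p \<in> edges A" "esrc p = a" "maps_onto \<pi>1 p e1" by blast
  obtain e2' where e2': "e2' \<in> edges C2" "maps_onto \<pi>2 p e2'" using maps_onto_C2[OF p(1)] by blast
  have "e2' = e2"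
    using maps_onto_unique[OF wf2 e2 e2'(1) wf_elen_pos[OF wf1 e1(1)] e1(2)]
      maps_onto_factor[OF p(1) e1(1) p(3) e2'(2)] by simp
  then show "p \<in> {p\<in>edges A. esrc p = a \<and> maps_onto \<pi>2 p e2}" using p e2' by auto
qed

lemma local_degree_chain_rule:
  assumes e2: "e2 \<in> edges C2"
  shows "local_degree A C2 \<pi>2 a e2 = (\<Sum>e1\<in>{e1\<in>edges C1. esrc e1 = \<pi>1 a \<and> maps_onto h e1 e2}.
    real (weight C1 e1) / real (weight C2 e2) * (elen e2 / elen e1) * local_degree A C1 \<pi>1 a e1)"
proof -
  let ?E1 = "{e1\<in>edges C1. esrc e1 = \<pi>1 a \<and> maps_onto h e1 e2}"
  let ?A1 = "\<lambda>e1. {p\<in>edges A. esrc p = a \<and> maps_onto \<pi>1 p e1}"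
  let ?t2 = "\<lambda>p. real (weight A p) / real (weight C2 e2) * (elen e2 / elen p)"
  have disj: "?A1 e1 \<inter> ?A1 e1' = {}" if "e1 \<in> ?E1" "e1' \<in> ?E1" "e1 \<noteq> e1'" for e1 e1'
    using maps_onto_unique[OF wf1 _ _ wf_elen_pos[OF wfA]] that by blast
  have "local_degree A C2 \<pi>2 a e2 = sum ?t2 (\<Union>e1\<in>?E1. ?A1 e1)"
    unfolding local_degree_def maps_onto_C2_decompose[OF e2] ..
  also have "\<dots> = (\<Sum>e1\<in>?E1. sum ?t2 (?A1 e1))"
    by (rule sum.UNION_disjoint) (use wf_finite_edges[OF wfA] wf_finite_edges[OF wf1] disj in auto)
  also have "\<dots> = (\<Sum>e1\<in>?E1. real (weight C1 e1) / real (weight C2 e2) * (elen e2 / elen e1)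
      * local_degree A C1 \<pi>1 a e1)"
  proof (rule sum.cong[OF refl])
    fix e1 assume e1: "e1 \<in> ?E1"
    have "elen e1 > 0" "real (weight C1 e1) > 0"
      using wf_elen_pos[OF wf1] wf_weight_pos[OF wf1] e1 by auto
    then show "sum ?t2 (?A1 e1) = real (weight C1 e1) / real (weight C2 e2) * (elen e2 / elen e1)
        * local_degree A C1 \<pi>1 a e1"
      unfolding local_degree_def sum_distrib_left by (intro sum.cong) (auto simp: field_simps)
  qed
  finally show ?thesis .
qed

lemma local_degree_pos:
  assumes p0: "p0 \<in> edges A"
  shows "\<exists>e1\<in>edges C1. esrc e1 = \<pi>1 (esrc p0) \<and> local_degree A C1 \<pi>1 (esrc p0) e1 > 0"
proof -
  let ?t1 = "\<lambda>e1 p. real (weight A p) / real (weight C1 e1) * (elen e1 / elen p)"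
  obtain e1 where e1: "e1 \<in> edges C1" "maps_onto \<pi>1 p0 e1" using maps_onto_C1[OF p0] by blast
  have "esrc e1 = \<pi>1 (esrc p0)"
    using maps_ontoD[OF e1(2), of 0] wf_elen_pos[OF wfA p0] by (simp add: esrc_def)
  moreover have "?t1 e1 p0 \<le> local_degree A C1 \<pi>1 (esrc p0) e1"
    unfolding local_degree_def
  proof (rule member_le_sum)
    show "p0 \<in> {p\<in>edges A. esrc p = esrc p0 \<and> maps_onto \<pi>1 p e1}" using p0 e1 by simp
    show "finite {p\<in>edges A. esrc p = esrc p0 \<and> maps_onto \<pi>1 p e1}"
      using wf_finite_edges[OF wfA] by simp
    show "?t1 e1 p \<ge> 0" if "p \<in> {p\<in>edges A. esrc p = esrc p0 \<and> maps_onto \<pi>1 p e1} - {p0}" for p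
    proof -
      have "elen p > 0" using that wf_elen_pos[OF wfA] by blast
      then show ?thesis using wf_elen_pos[OF wf1 e1(1)] by simp
    qed
  qed
  moreover have "?t1 e1 p0 > 0"
    using wf_weight_pos[OF wfA p0] wf_weight_pos[OF wf1 e1(1)] wf_elen_pos[OF wf1 e1(1)] wf_elen_pos[OF wfA p0]
    by simp
  ultimately show ?thesis using e1(1) by fastforce
qed

lemma harmonic_at_factor_vert:
  assumes p0: "p0 \<in> edges A" and a: "esrc p0 \<notin> bdry A"
  shows "harmonic_at C1 C2 h (\<pi>1 (esrc p0))"
proof -
  let ?a = "esrc p0"
  have aV: "?a \<in> verts A" using wf_esrc_vert[OF wfA p0] .
  obtain c1 where c1: "\<forall>e1\<in>edges C1. esrc e1 = \<pi>1 ?a \<longrightarrow> local_degree A C1 \<pi>1 ?a e1 = c1"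
    using harm1 aV a unfolding harmonic_at_iff by blast
  obtain c2 where c2: "\<forall>e2\<in>edges C2. esrc e2 = \<pi>2 ?a \<longrightarrow> local_degree A C2 \<pi>2 ?a e2 = c2"
    using harm2 aV a unfolding harmonic_at_iff by blast
  have "c1 > 0" using local_degree_pos[OF p0] c1 by force
  have "h (\<pi>1 ?a) = \<pi>2 ?a" using factor aV verts_subset_points[of A] by blast
  have "local_degree C1 C2 h (\<pi>1 ?a) e2 = c2 / c1" if e2: "e2 \<in> edges C2" "esrc e2 = h (\<pi>1 ?a)" for e2
  proof -
    have "c2 = local_degree A C2 \<pi>2 ?a e2" using c2 e2 \<open>h (\<pi>1 ?a) = \<pi>2 ?a\<close> by simp
    also have "\<dots> = (\<Sum>e1\<in>{e1\<in>edges C1. esrc e1 = \<pi>1 ?a \<and> maps_onto h e1 e2}.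
        real (weight C1 e1) / real (weight C2 e2) * (elen e2 / elen e1) * c1)"
      unfolding local_degree_chain_rule[OF e2(1)] using c1 by (intro sum.cong) auto
    also have "\<dots> = local_degree C1 C2 h (\<pi>1 ?a) e2 * c1"
      unfolding local_degree_def by (simp add: sum_distrib_right)
    finally show ?thesis using \<open>c1 > 0\<close> by (simp add: field_simps)
  qed
  then show ?thesis unfolding harmonic_at_iff by blast
qed

lemma harmonic_at_factor: "\<forall>v\<in>verts C1 - bdry C1. harmonic_at C1 C2 h v"
proof
  fix v assume v: "v \<in> verts C1 - bdry C1"
  show "harmonic_at C1 C2 h v"
  proof (cases "\<exists>e1\<in>edges C1. esrc e1 = v")
    case True
    then obtain e1 where e1: "e1 \<in> edges C1" "esrc e1 = v" by blast
    obtain p0 where p0: "p0 \<in> edges A" "maps_onto \<pi>1 p0 e1" using edge_lift[OF e1(1)] by blast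
    have "\<pi>1 (esrc p0) = v"
      using maps_ontoD[OF p0(2), of 0] wf_elen_pos[OF wfA p0(1)] e1(2) by (simp add: esrc_def)
    moreover have "esrc p0 \<in> points A"
      using wf_esrc_vert[OF wfA p0(1)] verts_subset_points[of A] by blast
    ultimately have "esrc p0 \<notin> bdry A" using v bdry1 by blast
    then show ?thesis using harmonic_at_factor_vert[OF p0(1)] \<open>\<pi>1 (esrc p0) = v\<close> by simp
  next
    case False
    then show ?thesis by (rule harmonic_at_no_edges)
  qed
qed

end

section \<open>Uniqueness of the quotient\<close>

locale finite_action =
  fixes G :: "('g, 'm) monoid_scheme" and act :: "'g \<Rightarrow> 'p \<Rightarrow> 'p" and S' :: "'p wmg"
  assumes wfS': "wf_wmg S'" and finG: "finite (carrier G)"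
begin

lemma is_quotientD:
  assumes "is_quotient G act S' S1 \<pi>1"
  shows "harmonic S' S1 \<pi>1" "\<pi>1 ` points S' = points S1"
    "\<forall>g\<in>carrier G. \<forall>x\<in>points S'. \<pi>1 (act g x) = \<pi>1 x"
    "\<forall>x\<in>points S'. \<forall>y\<in>points S'. \<pi>1 x = \<pi>1 y \<longrightarrow> (\<exists>g\<in>carrier G. act g x = y)"
    "{x\<in>points S'. \<pi>1 x \<in> bdry S1} = bdry S'"
  using assms unfolding is_quotient_def by blast+

lemma finite_quotient_fibre:
  assumes q: "is_quotient G act S' S1 \<pi>1"
  shows "finite {x\<in>points S'. \<pi>1 x = y}"
proof (cases "\<exists>x0\<in>points S'. \<pi>1 x0 = y")
  case True
  then obtain x0 where x0: "x0 \<in> points S'" "\<pi>1 x0 = y" by blast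
  have "{x\<in>points S'. \<pi>1 x = y} \<subseteq> (\<lambda>g. act g x0) ` carrier G"
    using is_quotientD(4)[OF q] x0 by blast
  then show ?thesis using finG finite_subset by blast
next
  case False
  then have "{x\<in>points S'. \<pi>1 x = y} = {}" by auto
  then show ?thesis by (simp only: finite.emptyI)
qed

lemma quotient_fibres_eq:
  assumes q1: "is_quotient G act S' S1 \<pi>1" and q2: "is_quotient G act S' S2 \<pi>2"
    and x: "x \<in> points S'" and y: "y \<in> points S'" and e: "\<pi>1 x = \<pi>1 y"
  shows "\<pi>2 x = \<pi>2 y"
proof -
  obtain g where g: "g \<in> carrier G" "act g x = y" using is_quotientD(4)[OF q1] x y e by blast
  then show ?thesis using is_quotientD(3)[OF q2] x by metis
qed

lemma quotient_not_contracted: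
  assumes q: "is_quotient G act S' S1 \<pi>1" and T': "subdivision T' S'" and f: "f \<in> edges T'"
  shows "\<not> contracted \<pi>1 f"
proof
  assume "contracted \<pi>1 f"
  then obtain v where v: "\<forall>x\<in>{0..elen f}. \<pi>1 (epar f x) = v" unfolding contracted_def by blast
  have wfT': "wf_wmg T'" using subdivision_wf[OF T'] .
  have "epar f ` {0..elen f} \<subseteq> {x\<in>points S'. \<pi>1 x = v}"
    using v epar_in_points[OF f] subdivision_points[OF T'] by auto
  then have "finite (epar f ` {0..elen f})" using finite_quotient_fibre[OF q] finite_subset by blast
  then have "finite {0..elen f}" using finite_imageD wf_epar_inj_on[OF wfT' f] by blast
  then show False using infinite_Icc[OF wf_elen_pos[OF wfT' f]] by blast
qed

lemma harmonicD:
  assumes "harmonic S' S1 \<pi>1"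
  obtains T' T where "subdivision T' S'" "subdivision T S1" "pl_comb T' T \<pi>1"
    "\<forall>v'\<in>verts T' - bdry T'. harmonic_at T' T \<pi>1 v'"
  using assms unfolding harmonic_def by blast

lemma quotient_refinement:
  assumes wf1: "wf_wmg S1" and q: "is_quotient G act S' S1 \<pi>1"
    and T': "subdivision T' S'" and T: "subdivision T S1" and pl: "pl_comb T' T \<pi>1"
    and W: "finite W" "W \<subseteq> points S'" "verts T' \<subseteq> W" "verts T \<subseteq> \<pi>1 ` W"
    and sat: "\<forall>x\<in>points S'. \<pi>1 x \<in> \<pi>1 ` W \<longrightarrow> x \<in> W"
  shows "subdivision (subdivide_at S1 (\<pi>1 ` W)) S1"
    and "refinement T' T (subdivide_at S' W) (subdivide_at S1 (\<pi>1 ` W)) \<pi>1"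
proof -
  have B': "subdivision (subdivide_at S' W) S'"
    using subdivision_subdivide_at[OF wfS' W(1) _ W(2)] subdivision_verts[OF T'] W(3) by blast
  have "\<pi>1 ` W \<subseteq> points S1" using image_mono[OF W(2), of \<pi>1] is_quotientD(2)[OF q] by simp
  moreover have "verts S1 \<subseteq> \<pi>1 ` W" using subdivision_verts[OF T] W(4) by blast
  ultimately show B: "subdivision (subdivide_at S1 (\<pi>1 ` W)) S1"
    using subdivision_subdivide_at[OF wf1 finite_imageI[OF W(1)]] by blast
  show "refinement T' T (subdivide_at S' W) (subdivide_at S1 (\<pi>1 ` W)) \<pi>1"
  proof
    show "wf_wmg T'" "wf_wmg T" using subdivision_wf T' T by auto
    show "subdivision (subdivide_at S' W) T'" using subdivision_finer[OF wfS' T' B'] W(3) by simp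
    show "subdivision (subdivide_at S1 (\<pi>1 ` W)) T" using subdivision_finer[OF wf1 T B] W(4) by simp
    show "pl_comb T' T \<pi>1" using pl .
    show "\<forall>f\<in>edges T'. \<not> contracted \<pi>1 f" using quotient_not_contracted[OF q T'] by blast
    show "\<pi>1 ` verts (subdivide_at S' W) \<subseteq> verts (subdivide_at S1 (\<pi>1 ` W))" by simp
    show "\<forall>x\<in>points T'. \<pi>1 x \<in> verts (subdivide_at S1 (\<pi>1 ` W)) \<longrightarrow> x \<in> verts (subdivide_at S' W)"
      using sat subdivision_points[OF T'] by simp
  qed
qed

lemma harmonic_factor_common_refinement:
  fixes S1 :: "'q wmg" and S2 :: "'r wmg"
  assumes wf1: "wf_wmg S1" and q1: "is_quotient G act S' S1 \<pi>1"
    and wf2: "wf_wmg S2" and q2: "is_quotient G act S' S2 \<pi>2"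
    and factor: "\<forall>x\<in>points S'. h (\<pi>1 x) = \<pi>2 x"
    and t1: "subdivision T1' S'" "subdivision T1 S1" "pl_comb T1' T1 \<pi>1"
      "\<forall>v'\<in>verts T1' - bdry T1'. harmonic_at T1' T1 \<pi>1 v'"
    and t2: "subdivision T2' S'" "subdivision T2 S2" "pl_comb T2' T2 \<pi>2"
      "\<forall>v'\<in>verts T2' - bdry T2'. harmonic_at T2' T2 \<pi>2 v'"
    and W: "finite W" "W \<subseteq> points S'" "verts T1' \<subseteq> W" "verts T2' \<subseteq> W"
      "verts T1 \<subseteq> \<pi>1 ` W" "verts T2 \<subseteq> \<pi>2 ` W"
    and sat: "\<forall>x\<in>points S'. \<pi>1 x \<in> \<pi>1 ` W \<longrightarrow> x \<in> W"
  shows "harmonic S1 S2 h"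
proof -
  have sur1: "\<pi>1 ` points S' = points S1" using is_quotientD(2)[OF q1] .
  have sat2: "\<forall>x\<in>points S'. \<pi>2 x \<in> \<pi>2 ` W \<longrightarrow> x \<in> W"
  proof (intro ballI impI)
    fix x assume x: "x \<in> points S'" "\<pi>2 x \<in> \<pi>2 ` W"
    then obtain w where "w \<in> W" "\<pi>2 x = \<pi>2 w" by blast
    then have "\<pi>1 x \<in> \<pi>1 ` W" using quotient_fibres_eq[OF q2 q1 x(1)] W(2) by blast
    then show "x \<in> W" using sat x(1) by blast
  qed
  note r1 = quotient_refinement[OF wf1 q1 t1(1-3) W(1,2,3,5) sat]
  note r2 = quotient_refinement[OF wf2 q2 t2(1-3) W(1,2,4,6) sat2]
  interpret r1: refinement T1' T1 "subdivide_at S' W" "subdivide_at S1 (\<pi>1 ` W)" \<pi>1 by (rule r1(2))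
  interpret r2: refinement T2' T2 "subdivide_at S' W" "subdivide_at S2 (\<pi>2 ` W)" \<pi>2 by (rule r2(2))
  have pB': "points (subdivide_at S' W) = points S'"
    using subdivision_points[OF r1.B'] subdivision_points[OF t1(1)] by simp
  interpret harmonic_factorisation "subdivide_at S' W" "subdivide_at S1 (\<pi>1 ` W)"
    "subdivide_at S2 (\<pi>2 ` W)" \<pi>1 \<pi>2 h
  proof
    show "wf_wmg (subdivide_at S' W)" "wf_wmg (subdivide_at S1 (\<pi>1 ` W))"
      "wf_wmg (subdivide_at S2 (\<pi>2 ` W))" using r1.wfB' r1.wfB r2.wfB .
    show "pl_comb (subdivide_at S' W) (subdivide_at S1 (\<pi>1 ` W)) \<pi>1"
      "pl_comb (subdivide_at S' W) (subdivide_at S2 (\<pi>2 ` W)) \<pi>2"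
      using r1.pl_comb_fine r2.pl_comb_fine .
    show "\<forall>p\<in>edges (subdivide_at S' W). \<not> contracted \<pi>1 p"
      "\<forall>p\<in>edges (subdivide_at S' W). \<not> contracted \<pi>2 p"
      using r1.not_contracted_fine r2.not_contracted_fine .
    show "\<forall>v\<in>verts (subdivide_at S' W) - bdry (subdivide_at S' W).
        harmonic_at (subdivide_at S' W) (subdivide_at S1 (\<pi>1 ` W)) \<pi>1 v"
      "\<forall>v\<in>verts (subdivide_at S' W) - bdry (subdivide_at S' W).
        harmonic_at (subdivide_at S' W) (subdivide_at S2 (\<pi>2 ` W)) \<pi>2 v"
      using r1.harmonic_at_fine[OF t1(4)] r2.harmonic_at_fine[OF t2(4)] .
    show "\<pi>1 ` points (subdivide_at S' W) = points (subdivide_at S1 (\<pi>1 ` W))"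
      using pB' subdivision_points[OF r1(1)] sur1 by simp
    show "\<forall>x\<in>points (subdivide_at S' W). h (\<pi>1 x) = \<pi>2 x" using factor pB' by simp
    show "\<pi>1 ` verts (subdivide_at S' W) = verts (subdivide_at S1 (\<pi>1 ` W))" by simp
    show "\<forall>x\<in>points (subdivide_at S' W). \<pi>1 x \<in> bdry (subdivide_at S1 (\<pi>1 ` W)) \<longleftrightarrow> x \<in> bdry (subdivide_at S' W)"
      "\<forall>x\<in>points (subdivide_at S' W). \<pi>2 x \<in> bdry (subdivide_at S2 (\<pi>2 ` W)) \<longleftrightarrow> x \<in> bdry (subdivide_at S' W)"
      using is_quotientD(5)[OF q1] is_quotientD(5)[OF q2] pB' by auto
  qed
  show ?thesis unfolding harmonic_def using r1(1) r2(1) pl_comb_factor harmonic_at_factor by blast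
qed

lemma harmonic_quotient_factor:
  fixes S1 :: "'q wmg" and S2 :: "'r wmg"
  assumes wf1: "wf_wmg S1" and q1: "is_quotient G act S' S1 \<pi>1"
    and wf2: "wf_wmg S2" and q2: "is_quotient G act S' S2 \<pi>2"
    and factor: "\<forall>x\<in>points S'. h (\<pi>1 x) = \<pi>2 x"
  shows "harmonic S1 S2 h"
proof -
  obtain T1' T1 where t1: "subdivision T1' S'" "subdivision T1 S1" "pl_comb T1' T1 \<pi>1"
    "\<forall>v'\<in>verts T1' - bdry T1'. harmonic_at T1' T1 \<pi>1 v'"
      using harmonicD[OF is_quotientD(1)[OF q1]] .
  obtain T2' T2 where t2: "subdivision T2' S'" "subdivision T2 S2" "pl_comb T2' T2 \<pi>2"
    "\<forall>v'\<in>verts T2' - bdry T2'. harmonic_at T2' T2 \<pi>2 v'"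
      using harmonicD[OF is_quotientD(1)[OF q2]] .
  have sur1: "\<pi>1 ` points S' = points S1" and sur2: "\<pi>2 ` points S' = points S2"
    using is_quotientD(2)[OF q1] is_quotientD(2)[OF q2] .
  define W where "W = {x\<in>points S'. \<pi>1 x \<in> \<pi>1 ` (verts T1' \<union> verts T2') \<or> \<pi>1 x \<in> verts T1
    \<or> \<pi>2 x \<in> verts T2}"
  have WP: "W \<subseteq> points S'" unfolding W_def by auto
  have fibres: "\<pi>2 x = \<pi>2 y \<longleftrightarrow> \<pi>1 x = \<pi>1 y" if "x \<in> points S'" "y \<in> points S'" for x y
    using quotient_fibres_eq[OF q1 q2] quotient_fibres_eq[OF q2 q1] that by blast
  have finW: "finite W"
  proof -
    have "W = (\<Union>y\<in>\<pi>1 ` (verts T1' \<union> verts T2') \<union> verts T1. {x\<in>points S'. \<pi>1 x = y})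
        \<union> (\<Union>z\<in>verts T2. {x\<in>points S'. \<pi>2 x = z})"
      unfolding W_def by auto
    moreover have "finite (verts T1')" "finite (verts T2')" "finite (verts T1)" "finite (verts T2)"
      using wf_finite_verts subdivision_wf t1 t2 by blast+
    ultimately show ?thesis using finite_quotient_fibre[OF q1] finite_quotient_fibre[OF q2] by simp
  qed
  have vT1': "verts T1' \<subseteq> W" and vT2': "verts T2' \<subseteq> W"
    using verts_subset_points[of T1'] verts_subset_points[of T2']
      subdivision_points[OF t1(1)] subdivision_points[OF t2(1)] unfolding W_def by auto
  have vT1: "verts T1 \<subseteq> \<pi>1 ` W"
  proof
    fix y assume y: "y \<in> verts T1"
    then have "y \<in> points S1" using verts_subset_points[of T1] subdivision_points[OF t1(2)] by auto
    then obtain x where "x \<in> points S'" "y = \<pi>1 x" using sur1 by (metis imageE)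
    then show "y \<in> \<pi>1 ` W" using y unfolding W_def by auto
  qed
  have vT2: "verts T2 \<subseteq> \<pi>2 ` W"
  proof
    fix z assume z: "z \<in> verts T2"
    then have "z \<in> points S2" using verts_subset_points[of T2] subdivision_points[OF t2(2)] by auto
    then obtain x where "x \<in> points S'" "z = \<pi>2 x" using sur2 by (metis imageE)
    then show "z \<in> \<pi>2 ` W" using z unfolding W_def by auto
  qed
  have sat: "x \<in> W" if "x \<in> points S'" "w \<in> W" "\<pi>1 x = \<pi>1 w" for x w
    using that fibres[of x w] unfolding W_def by auto
  have sat1: "\<forall>x\<in>points S'. \<pi>1 x \<in> \<pi>1 ` W \<longrightarrow> x \<in> W"
    using sat by (metis imageE)
  show ?thesis
    by (rule harmonic_factor_common_refinement[OF wf1 q1 wf2 q2 factor t1 t2 finW WP vT1' vT2' vT1 vT2 sat1])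
qed

lemma quotient_unique:
  fixes S1 :: "'q wmg" and S2 :: "'r wmg"
  assumes wf1: "wf_wmg S1" and q1: "is_quotient G act S' S1 \<pi>1"
    and wf2: "wf_wmg S2" and q2: "is_quotient G act S' S2 \<pi>2"
  shows "\<exists>h. harmonic_iso S1 S2 h \<and> (\<forall>x\<in>points S'. h (\<pi>1 x) = \<pi>2 x)"
proof -
  have some_preimage: "(SOME x'. x' \<in> points S' \<and> \<pi> x' = \<pi> x) \<in> points S' \<and>
      \<pi> (SOME x'. x' \<in> points S' \<and> \<pi> x' = \<pi> x) = \<pi> x" if "x \<in> points S'" for \<pi> :: "'p \<Rightarrow> 'z" and x
    by (rule someI_ex) (use that in blast)
  define h where "h = (\<lambda>y. \<pi>2 (SOME x. x \<in> points S' \<and> \<pi>1 x = y))"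
  define k where "k = (\<lambda>z. \<pi>1 (SOME x. x \<in> points S' \<and> \<pi>2 x = z))"
  have hp: "\<forall>x\<in>points S'. h (\<pi>1 x) = \<pi>2 x"
    unfolding h_def using some_preimage quotient_fibres_eq[OF q1 q2] by blast
  have kp: "\<forall>x\<in>points S'. k (\<pi>2 x) = \<pi>1 x"
    unfolding k_def using some_preimage quotient_fibres_eq[OF q2 q1] by blast
  have "\<forall>y\<in>points S1. k (h y) = y"
  proof
    fix y assume "y \<in> points S1"
    then obtain x where "x \<in> points S'" "y = \<pi>1 x" using is_quotientD(2)[OF q1] by (metis imageE)
    then show "k (h y) = y" using hp kp by simp
  qed
  moreover have "\<forall>z\<in>points S2. h (k z) = z"
  proof
    fix z assume "z \<in> points S2"
    then obtain x where "x \<in> points S'" "z = \<pi>2 x" using is_quotientD(2)[OF q2] by (metis imageE)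
    then show "h (k z) = z" using hp kp by simp
  qed
  ultimately have "harmonic_iso S1 S2 h"
    unfolding harmonic_iso_def
    using harmonic_quotient_factor[OF wf1 q1 wf2 q2 hp] harmonic_quotient_factor[OF wf2 q2 wf1 q1 kp]
    by blast
  then show ?thesis using hp by blast
qed

end

section \<open>Existence of the quotient\<close>

locale harmonic_action = finite_action G act S'
  for G :: "('g, 'm) monoid_scheme" and act :: "'g \<Rightarrow> 'p \<Rightarrow> 'p" and S' :: "'p wmg" +
  assumes grp: "group G" and ga: "group_action G (points S') act"
    and harmG: "\<forall>g\<in>carrier G. harmonic S' S' (act g)"
    and bdG: "\<forall>g\<in>carrier G. act g ` bdry S' \<subseteq> bdry S'"
begin

lemmas inv_closed = group.inv_closed[OF grp]
  and one_closed = monoid.one_closed[OF group.is_monoid[OF grp]]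
  and m_closed = monoid.m_closed[OF group.is_monoid[OF grp]]

lemma act_points: "g \<in> carrier G \<Longrightarrow> x \<in> points S' \<Longrightarrow> act g x \<in> points S'"
  using group_action.element_image[OF ga] by blast

lemma act_comp:
  "g \<in> carrier G \<Longrightarrow> h \<in> carrier G \<Longrightarrow> x \<in> points S' \<Longrightarrow> act (g \<otimes>\<^bsub>G\<^esub> h) x = act g (act h x)"
  using group_action.composition_rule[OF ga] by blast

lemma act_one: "x \<in> points S' \<Longrightarrow> act \<one>\<^bsub>G\<^esub> x = x"
  using group_action.id_eq_one[OF ga] by (metis restrict_apply')

lemma act_inv: "g \<in> carrier G \<Longrightarrow> x \<in> points S' \<Longrightarrow> act (inv\<^bsub>G\<^esub> g) (act g x) = x"
  using group_action.orbit_sym_aux[OF ga] by blast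

lemma act_inj: "g \<in> carrier G \<Longrightarrow> x \<in> points S' \<Longrightarrow> y \<in> points S' \<Longrightarrow> act g x = act g y \<Longrightarrow> x = y"
  by (metis act_inv)

lemma act_not_contracted:
  assumes g: "g \<in> carrier G" and T': "subdivision T' S'" and f: "f \<in> edges T'"
  shows "\<not> contracted (act g) f"
proof
  assume "contracted (act g) f"
  then obtain v where v: "\<forall>x\<in>{0..elen f}. act g (epar f x) = v" unfolding contracted_def by blast
  have wfT': "wf_wmg T'" using subdivision_wf[OF T'] .
  have l: "elen f > 0" using wf_elen_pos[OF wfT' f] .
  have p: "epar f 0 \<in> points S'" "epar f (elen f) \<in> points S'"
    using epar_in_points[OF f] subdivision_points[OF T'] l by auto
  have "act g (epar f 0) = act g (epar f (elen f))" using v l by auto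
  then have "epar f 0 = epar f (elen f)" using act_inj[OF g p] by simp
  then show False using wf_esrc_ne_etgt[OF wfT' f] by (simp add: esrc_def etgt_def)
qed

definition dom_subdiv :: "'g \<Rightarrow> 'p wmg" where
  "dom_subdiv g = (SOME T'. \<exists>T. subdivision T' S' \<and> subdivision T S' \<and> pl_comb T' T (act g) \<and>
        (\<forall>v'\<in>verts T' - bdry T'. harmonic_at T' T (act g) v'))"

definition cod_subdiv :: "'g \<Rightarrow> 'p wmg" where
  "cod_subdiv g = (SOME T. subdivision (dom_subdiv g) S' \<and> subdivision T S' \<and> pl_comb (dom_subdiv g) T (act g) \<and>
        (\<forall>v'\<in>verts (dom_subdiv g) - bdry (dom_subdiv g). harmonic_at (dom_subdiv g) T (act g) v'))"

lemma harmonic_act_subdivs: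
  assumes g: "g \<in> carrier G"
  shows "subdivision (dom_subdiv g) S' \<and> subdivision (cod_subdiv g) S' \<and> pl_comb (dom_subdiv g) (cod_subdiv g) (act g) \<and>
        (\<forall>v'\<in>verts (dom_subdiv g) - bdry (dom_subdiv g). harmonic_at (dom_subdiv g) (cod_subdiv g) (act g) v')"
proof -
  have "\<exists>T' T. subdivision T' S' \<and> subdivision T S' \<and> pl_comb T' T (act g) \<and>
        (\<forall>v'\<in>verts T' - bdry T'. harmonic_at T' T (act g) v')"
    using harmG g unfolding harmonic_def by blast
  then have "\<exists>T. subdivision (dom_subdiv g) S' \<and> subdivision T S' \<and> pl_comb (dom_subdiv g) T (act g) \<and>
        (\<forall>v'\<in>verts (dom_subdiv g) - bdry (dom_subdiv g). harmonic_at (dom_subdiv g) T (act g) v')"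
    unfolding dom_subdiv_def by (rule someI_ex)
  then show ?thesis unfolding cod_subdiv_def by (rule someI_ex)
qed

lemma dom_subdiv_subdivision: "g \<in> carrier G \<Longrightarrow> subdivision (dom_subdiv g) S'"
  and cod_subdiv_subdivision: "g \<in> carrier G \<Longrightarrow> subdivision (cod_subdiv g) S'"
  using harmonic_act_subdivs by blast+

definition witness_verts :: "'p set" where
  "witness_verts = (\<Union>g\<in>carrier G. verts (dom_subdiv g) \<union> verts (cod_subdiv g))"

lemma witness_verts_points: "witness_verts \<subseteq> points S'"
proof
  fix x assume "x \<in> witness_verts"
  then obtain g where g: "g \<in> carrier G" "x \<in> verts (dom_subdiv g) \<union> verts (cod_subdiv g)"
    unfolding witness_verts_def by blast
  then show "x \<in> points S'"
    using verts_subset_points[of "dom_subdiv g"] verts_subset_points[of "cod_subdiv g"]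
      subdivision_points[OF dom_subdiv_subdivision[OF g(1)]] subdivision_points[OF cod_subdiv_subdivision[OF g(1)]] by blast
qed

lemma finite_witness_verts: "finite witness_verts"
  unfolding witness_verts_def
proof (rule finite_UN_I[OF finG])
  fix g assume g: "g \<in> carrier G"
  show "finite (verts (dom_subdiv g) \<union> verts (cod_subdiv g))"
    using wf_finite_verts[OF subdivision_wf[OF dom_subdiv_subdivision[OF g]]]
      wf_finite_verts[OF subdivision_wf[OF cod_subdiv_subdivision[OF g]]] by simp
qed

lemma verts_witness_verts: "verts S' \<subseteq> witness_verts"
  unfolding witness_verts_def using subdivision_verts[OF dom_subdiv_subdivision[OF one_closed]] one_closed
  by blast

lemma refinement_invariant:
  assumes V: "finite V" "witness_verts \<subseteq> V" "V \<subseteq> points S'"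
    and inv: "\<And>h x. h \<in> carrier G \<Longrightarrow> x \<in> points S' \<Longrightarrow> act h x \<in> V \<longleftrightarrow> x \<in> V"
    and g: "g \<in> carrier G"
  shows "refinement (dom_subdiv g) (cod_subdiv g) (subdivide_at S' V) (subdivide_at S' V) (act g)"
proof -
  note t = harmonic_act_subdivs[OF g]
  have B: "subdivision (subdivide_at S' V) S'"
    using subdivision_subdivide_at[OF wfS' V(1) _ V(3)] verts_witness_verts V(2) by blast
  have "verts (dom_subdiv g) \<subseteq> V" "verts (cod_subdiv g) \<subseteq> V"
    using V(2) g unfolding witness_verts_def by auto
  then show ?thesis
  proof unfold_locales
    show "wf_wmg (dom_subdiv g)" "wf_wmg (cod_subdiv g)" using t subdivision_wf by blast+
    show "subdivision (subdivide_at S' V) (dom_subdiv g)" "subdivision (subdivide_at S' V) (cod_subdiv g)"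
      using subdivision_finer[OF wfS' _ B] t \<open>verts (dom_subdiv g) \<subseteq> V\<close> \<open>verts (cod_subdiv g) \<subseteq> V\<close>
      by auto
    show "pl_comb (dom_subdiv g) (cod_subdiv g) (act g)" using t by blast
    show "\<forall>f\<in>edges (dom_subdiv g). \<not> contracted (act g) f" using act_not_contracted[OF g] t by blast
    show "act g ` verts (subdivide_at S' V) \<subseteq> verts (subdivide_at S' V)"
      using inv[OF g] V(3) by auto
    show "\<forall>x\<in>points (dom_subdiv g). act g x \<in> verts (subdivide_at S' V) \<longrightarrow> x \<in> verts (subdivide_at S' V)"
      using inv[OF g] subdivision_points t by auto
  qed
qed

definition inv_verts :: "'p set" where "inv_verts = (\<Union>g\<in>carrier G. act g ` witness_verts)"

lemma inv_verts_points: "inv_verts \<subseteq> points S'"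
  unfolding inv_verts_def using witness_verts_points act_points by blast

lemma finite_inv_verts: "finite inv_verts"
  unfolding inv_verts_def using finG finite_witness_verts by simp

lemma witness_verts_inv_verts: "witness_verts \<subseteq> inv_verts"
proof
  fix x assume x: "x \<in> witness_verts"
  then have "x = act \<one>\<^bsub>G\<^esub> x" using act_one witness_verts_points by auto
  then show "x \<in> inv_verts" unfolding inv_verts_def using x one_closed by blast
qed

lemma inv_verts_act: "g \<in> carrier G \<Longrightarrow> x \<in> inv_verts \<Longrightarrow> act g x \<in> inv_verts"
proof -
  assume g: "g \<in> carrier G" and "x \<in> inv_verts"
  then obtain h y where hy: "h \<in> carrier G" "y \<in> witness_verts" "x = act h y"
    unfolding inv_verts_def by blast
  then have "act g x = act (g \<otimes>\<^bsub>G\<^esub> h) y" using act_comp[OF g hy(1)] witness_verts_points by auto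
  then show "act g x \<in> inv_verts" unfolding inv_verts_def using m_closed[OF g hy(1)] hy(2) by blast
qed

lemma inv_verts_act_iff: "g \<in> carrier G \<Longrightarrow> x \<in> points S' \<Longrightarrow> act g x \<in> inv_verts \<longleftrightarrow> x \<in> inv_verts"
  using inv_verts_act inv_closed act_inv by metis

definition Sinv :: "'p wmg" where "Sinv = subdivide_at S' inv_verts"

lemma subdivision_Sinv: "subdivision Sinv S'"
  unfolding Sinv_def using subdivision_subdivide_at[OF wfS' finite_inv_verts _ inv_verts_points]
    verts_witness_verts witness_verts_inv_verts by blast

lemma verts_Sinv: "verts Sinv = inv_verts" unfolding Sinv_def by simp

lemma wf_Sinv: "wf_wmg Sinv" using subdivision_wf[OF subdivision_Sinv] .

text \<open>Adding the midpoints of the edges of \<open>Sinv\<close> prevents any \<open>act g\<close> from reversing an edge.\<close>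

definition midpoints :: "'p set" where "midpoints = (\<lambda>q. epar q (elen q / 2)) ` edges Sinv"

lemma finite_midpoints: "finite midpoints"
  unfolding midpoints_def using wf_finite_edges[OF wf_Sinv] by simp

lemma midpoints_points: "midpoints \<subseteq> points S'"
proof
  fix x assume "x \<in> midpoints"
  then obtain q where q: "q \<in> edges Sinv" "x = epar q (elen q / 2)" unfolding midpoints_def by blast
  then show "x \<in> points S'"
    using epar_in_points[OF q(1), of "elen q / 2"] wf_elen_pos[OF wf_Sinv q(1)] subdivision_points[OF subdivision_Sinv]
    by auto
qed

lemma midpoints_inv_verts: "midpoints \<inter> inv_verts = {}"
proof -
  have "epar q (elen q / 2) \<notin> inv_verts" if "q \<in> edges Sinv" for q
    using wf_interior_notvert[OF wf_Sinv that, of "elen q / 2"] wf_elen_pos[OF wf_Sinv that] verts_Sinv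
    by auto
  then show ?thesis unfolding midpoints_def by blast
qed

lemma midpoints_act: "g \<in> carrier G \<Longrightarrow> x \<in> midpoints \<Longrightarrow> act g x \<in> midpoints"
proof -
  assume g: "g \<in> carrier G" and "x \<in> midpoints"
  then obtain q where q: "q \<in> edges Sinv" "x = epar q (elen q / 2)" unfolding midpoints_def by blast
  interpret r: refinement "dom_subdiv g" "cod_subdiv g" Sinv Sinv "act g"
    unfolding Sinv_def
    by (rule refinement_invariant[OF finite_inv_verts witness_verts_inv_verts inv_verts_points
          inv_verts_act_iff g])
  obtain q' where q': "q' \<in> edges Sinv" "maps_onto (act g) q q'"
    using r.fine_edge_maps_onto q(1) by blast
  have l: "elen q > 0" using wf_elen_pos[OF wf_Sinv q(1)] .
  have "act g x = epar q' (elen q' / elen q * (elen q / 2))"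
    using maps_ontoD[OF q'(2), of "elen q / 2"] q l by simp
  then show "act g x \<in> midpoints" unfolding midpoints_def using q'(1) l by simp
qed

lemma midpoints_act_iff: "g \<in> carrier G \<Longrightarrow> x \<in> points S' \<Longrightarrow> act g x \<in> midpoints \<longleftrightarrow> x \<in> midpoints"
  using midpoints_act inv_closed act_inv by metis

definition fine_verts :: "'p set" where "fine_verts = inv_verts \<union> midpoints"

lemma fine_verts_act_iff: "g \<in> carrier G \<Longrightarrow> x \<in> points S' \<Longrightarrow> act g x \<in> fine_verts \<longleftrightarrow> x \<in> fine_verts"
  unfolding fine_verts_def using inv_verts_act_iff midpoints_act_iff by blast

lemma fine_verts_points: "fine_verts \<subseteq> points S'"
  unfolding fine_verts_def using inv_verts_points midpoints_points by blast

lemma finite_fine_verts: "finite fine_verts"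
  unfolding fine_verts_def using finite_inv_verts finite_midpoints by blast

definition Sfine :: "'p wmg" where "Sfine = subdivide_at S' fine_verts"

lemma subdivision_Sfine: "subdivision Sfine S'"
  unfolding Sfine_def using subdivision_subdivide_at[OF wfS' finite_fine_verts _ fine_verts_points]
    verts_witness_verts witness_verts_inv_verts unfolding fine_verts_def by blast

lemma verts_Sfine: "verts Sfine = fine_verts" unfolding Sfine_def by simp

lemma wf_Sfine: "wf_wmg Sfine" using subdivision_wf[OF subdivision_Sfine] .

lemma bdry_Sfine: "bdry Sfine = bdry S'" using subdivision_bdry[OF subdivision_Sfine] .

lemma epar_Sfine_points: "p \<in> edges Sfine \<Longrightarrow> 0 \<le> x \<Longrightarrow> x \<le> elen p \<Longrightarrow> epar p x \<in> points S'"
  using epar_in_points[of p Sfine x] subdivision_points[OF subdivision_Sfine] by auto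

lemma act_Sfine:
  assumes g: "g \<in> carrier G"
  shows "pl_comb Sfine Sfine (act g)" "\<forall>p\<in>edges Sfine. \<not> contracted (act g) p"
    "\<forall>v'\<in>verts Sfine - bdry Sfine. harmonic_at Sfine Sfine (act g) v'"
proof -
  interpret r: refinement "dom_subdiv g" "cod_subdiv g" Sfine Sfine "act g"
    unfolding Sfine_def
    using refinement_invariant[OF finite_fine_verts _ fine_verts_points fine_verts_act_iff g]
      witness_verts_inv_verts unfolding fine_verts_def by blast
  show "pl_comb Sfine Sfine (act g)" "\<forall>p\<in>edges Sfine. \<not> contracted (act g) p"
    using r.pl_comb_fine r.not_contracted_fine by auto
  show "\<forall>v'\<in>verts Sfine - bdry Sfine. harmonic_at Sfine Sfine (act g) v'"
    using r.harmonic_at_fine harmonic_act_subdivs[OF g] by blast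
qed

lemma Sinv_edge_fine_verts:
  assumes q: "q \<in> edges Sinv" and s: "0 \<le> s" "s \<le> elen q" "epar q s \<in> fine_verts"
  shows "s = 0 \<or> s = elen q / 2 \<or> s = elen q"
proof (rule ccontr)
  assume ne: "\<not> (s = 0 \<or> s = elen q / 2 \<or> s = elen q)"
  then have s': "0 < s" "s < elen q" using s by auto
  have "epar q s \<notin> inv_verts" using wf_interior_notvert[OF wf_Sinv q s'] verts_Sinv by simp
  then obtain q' where q': "q' \<in> edges Sinv" "epar q s = epar q' (elen q' / 2)"
    using s(3) unfolding fine_verts_def midpoints_def by blast
  have "0 < elen q' / 2" "elen q' / 2 < elen q'" using wf_elen_pos[OF wf_Sinv q'(1)] by auto
  then have "(q' = q \<and> elen q' / 2 = s) \<or> (q' = erev q \<and> elen q' / 2 = elen q - s)"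
    using wf_interior_point_eq[OF wf_Sinv q q'(1) s'] q'(2) by blast
  then show False using ne by auto
qed

lemma Sfine_edge_one_end_inv:
  assumes p: "p \<in> edges Sfine"
  shows "esrc p \<in> inv_verts \<longleftrightarrow> etgt p \<notin> inv_verts"
proof -
  have "verts Sinv \<subseteq> verts Sfine" using verts_Sinv verts_Sfine unfolding fine_verts_def by auto
  then obtain q c where q: "q \<in> edges Sinv" "seg q c p"
    using subdivision_edge_seg[OF wfS' subdivision_Sinv subdivision_Sfine _ p] by blast
  have lq: "elen q > 0" and lp: "elen p > 0"
    using wf_elen_pos[OF wf_Sinv q(1)] wf_elen_pos[OF wf_Sfine p] .
  have cs: "0 \<le> c" "c + elen p \<le> elen q" using seg_bounds[OF q(2)] by auto
  have sp: "esrc p = epar q c" "etgt p = epar q (c + elen p)"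
    using segD[OF q(2), of 0] segD[OF q(2), of "elen p"] lp by (auto simp: esrc_def etgt_def)
  have "epar q c \<in> fine_verts" "epar q (c + elen p) \<in> fine_verts"
    using wf_esrc_vert[OF wf_Sfine p] wf_etgt_vert[OF wf_Sfine p] verts_Sfine sp by auto
  moreover have "c \<le> elen q" "0 \<le> c + elen p" using cs lp by linarith+
  ultimately have c1: "c = 0 \<or> c = elen q / 2 \<or> c = elen q"
    and c2: "c + elen p = 0 \<or> c + elen p = elen q / 2 \<or> c + elen p = elen q"
    using Sinv_edge_fine_verts[OF q(1) cs(1)] Sinv_edge_fine_verts[OF q(1) _ cs(2)] by blast+
  have "epar q (elen q / 2) \<in> fine_verts" unfolding fine_verts_def midpoints_def using q(1) by blast
  then have "\<not> (c < elen q / 2 \<and> elen q / 2 < c + elen p)"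
    using wf_interior_notvert[OF wf_Sfine p, of "elen q / 2 - c"] segD[OF q(2), of "elen q / 2 - c"] verts_Sfine
    by auto
  then consider "c = 0" "c + elen p = elen q / 2" | "c = elen q / 2" "c + elen p = elen q"
    using c1 c2 lp lq by argo
  moreover have "epar q 0 \<in> inv_verts" "epar q (elen q) \<in> inv_verts"
    using wf_esrc_vert[OF wf_Sinv q(1)] wf_etgt_vert[OF wf_Sinv q(1)] verts_Sinv
    by (auto simp: esrc_def etgt_def)
  moreover have "epar q (elen q / 2) \<notin> inv_verts"
    using midpoints_inv_verts q(1) unfolding midpoints_def by blast
  ultimately show ?thesis
  proof cases
    case 1
    then have "esrc p = epar q 0" "etgt p = epar q (elen q / 2)" using sp by (simp_all only:)
    then show ?thesis using \<open>epar q 0 \<in> inv_verts\<close> \<open>epar q (elen q / 2) \<notin> inv_verts\<close> by simp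
  next
    case 2
    then have "esrc p = epar q (elen q / 2)" "etgt p = epar q (elen q)" using sp by (simp_all only:)
    then show ?thesis using \<open>epar q (elen q) \<in> inv_verts\<close> \<open>epar q (elen q / 2) \<notin> inv_verts\<close> by simp
  qed
qed

lemma act_esrc_ne_etgt:
  assumes p: "p \<in> edges Sfine" and g: "g \<in> carrier G"
  shows "act g (esrc p) \<noteq> etgt p"
proof
  assume h: "act g (esrc p) = etgt p"
  have "esrc p \<in> points S'" using wf_esrc_vert[OF wf_Sfine p] verts_Sfine fine_verts_points by auto
  then have "esrc p \<in> inv_verts \<longleftrightarrow> etgt p \<in> inv_verts" using inv_verts_act_iff[OF g] h by metis
  then show False using Sfine_edge_one_end_inv[OF p] by simp
qed

definition edge_act :: "'g \<Rightarrow> 'p edge \<Rightarrow> 'p edge" where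
  "edge_act g p = (THE q. q \<in> edges Sfine \<and> maps_onto (act g) p q)"

lemma edge_act_maps:
  assumes g: "g \<in> carrier G" and p: "p \<in> edges Sfine"
  shows "edge_act g p \<in> edges Sfine \<and> maps_onto (act g) p (edge_act g p)"
proof -
  obtain q where q: "q \<in> edges Sfine" "maps_onto (act g) p q"
    using act_Sfine(1,2)[OF g] p unfolding pl_comb_def by blast
  have "edge_act g p = q" unfolding edge_act_def
  proof (rule the_equality)
    show "q \<in> edges Sfine \<and> maps_onto (act g) p q" using q by simp
    show "q' = q" if "q' \<in> edges Sfine \<and> maps_onto (act g) p q'" for q'
      using maps_onto_unique[OF wf_Sfine q(1) _ wf_elen_pos[OF wf_Sfine p] q(2)] that by blast
  qed
  then show ?thesis using q by simp
qed

lemma edge_act_in: "g \<in> carrier G \<Longrightarrow> p \<in> edges Sfine \<Longrightarrow> edge_act g p \<in> edges Sfine"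
  using edge_act_maps by blast

lemma edge_act_eqI:
  assumes g: "g \<in> carrier G" and p: "p \<in> edges Sfine" and q: "q \<in> edges Sfine" and m: "maps_onto (act g) p q"
  shows "edge_act g p = q"
  using maps_onto_unique[OF wf_Sfine edge_act_in[OF g p] q wf_elen_pos[OF wf_Sfine p]] edge_act_maps[OF g p] m
  by metis

lemma edge_act_epar:
  assumes g: "g \<in> carrier G" and p: "p \<in> edges Sfine" and x: "0 \<le> x" "x \<le> elen p"
  shows "act g (epar p x) = epar (edge_act g p) (elen (edge_act g p) / elen p * x)"
  using maps_ontoD[OF conjunct2[OF edge_act_maps[OF g p]] x] .

lemma esrc_edge_act:
  assumes g: "g \<in> carrier G" and p: "p \<in> edges Sfine"
  shows "esrc (edge_act g p) = act g (esrc p)"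
  using edge_act_epar[OF g p, of 0] wf_elen_pos[OF wf_Sfine p] by (simp add: esrc_def)

lemma edge_act_mult:
  assumes g: "g \<in> carrier G" and h: "h \<in> carrier G" and p: "p \<in> edges Sfine"
  shows "edge_act (g \<otimes>\<^bsub>G\<^esub> h) p = edge_act g (edge_act h p)"
proof (rule edge_act_eqI[OF m_closed[OF g h] p edge_act_in[OF g edge_act_in[OF h p]]])
  let ?q1 = "edge_act h p" and ?q = "edge_act g (edge_act h p)"
  have q1: "?q1 \<in> edges Sfine" using edge_act_in[OF h p] .
  have lp: "elen p > 0" and l1: "elen ?q1 > 0"
    using wf_elen_pos[OF wf_Sfine p] wf_elen_pos[OF wf_Sfine q1] .
  show "maps_onto (act (g \<otimes>\<^bsub>G\<^esub> h)) p ?q"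
    unfolding maps_onto_def
  proof
    fix x assume x: "x \<in> {0..elen p}"
    have r: "elen ?q1 / elen p * x \<in> {0..elen ?q1}" using rescale_in_range[OF lp _ x] l1 by simp
    have "act (g \<otimes>\<^bsub>G\<^esub> h) (epar p x) = act g (epar ?q1 (elen ?q1 / elen p * x))"
      using act_comp[OF g h epar_Sfine_points[OF p]] edge_act_epar[OF h p] x by auto
    also have "\<dots> = epar ?q (elen ?q / elen ?q1 * (elen ?q1 / elen p * x))"
      using edge_act_epar[OF g q1] r by auto
    finally show "act (g \<otimes>\<^bsub>G\<^esub> h) (epar p x) = epar ?q (elen ?q / elen p * x)" using l1 by simp
  qed
qed

lemma edge_act_one: "p \<in> edges Sfine \<Longrightarrow> edge_act \<one>\<^bsub>G\<^esub> p = p"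
  by (rule edge_act_eqI[OF one_closed])
    (use act_one epar_Sfine_points wf_elen_pos[OF wf_Sfine] in \<open>auto simp: maps_onto_def\<close>)

lemma edge_act_inv: "g \<in> carrier G \<Longrightarrow> p \<in> edges Sfine \<Longrightarrow> edge_act (inv\<^bsub>G\<^esub> g) (edge_act g p) = p"
  using edge_act_mult[OF inv_closed, of g g p] group.l_inv[OF grp] edge_act_one by metis

lemma edge_act_inj:
  "g \<in> carrier G \<Longrightarrow> p \<in> edges Sfine \<Longrightarrow> p' \<in> edges Sfine \<Longrightarrow> edge_act g p = edge_act g p' \<Longrightarrow> p = p'"
  using edge_act_inv by metis

lemma edge_act_erev:
  assumes g: "g \<in> carrier G" and p: "p \<in> edges Sfine"
  shows "edge_act g (erev p) = erev (edge_act g p)"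
  using edge_act_eqI[OF g wf_erev_edge[OF wf_Sfine p] wf_erev_edge[OF wf_Sfine edge_act_in[OF g p]]]
    maps_onto_erev[OF conjunct2[OF edge_act_maps[OF g p]] wf_elen_pos[OF wf_Sfine p]]
    wf_elen_pos[OF wf_Sfine edge_act_in[OF g p]] by simp

lemma edge_act_ne_erev:
  assumes g: "g \<in> carrier G" and p: "p \<in> edges Sfine"
  shows "edge_act g p \<noteq> erev p"
proof
  assume "edge_act g p = erev p"
  then have "act g (esrc p) = esrc (erev p)" using esrc_edge_act[OF g p] by simp
  also have "esrc (erev p) = etgt p" using erev_src[of p] wf_elen_pos[OF wf_Sfine p] by simp
  finally show False using act_esrc_ne_etgt[OF p g] by simp
qed

abbreviation orb :: "'p \<Rightarrow> 'p set" where "orb \<equiv> orbit G act"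

lemma orb_act:
  assumes g: "g \<in> carrier G" and x: "x \<in> points S'"
  shows "orb (act g x) = orb x"
proof
  show "orb (act g x) \<subseteq> orb x"
  proof
    fix y assume "y \<in> orb (act g x)"
    then obtain h where h: "h \<in> carrier G" "y = act h (act g x)" unfolding orbit_def by blast
    then have "y = act (h \<otimes>\<^bsub>G\<^esub> g) x" using act_comp[OF h(1) g x] by simp
    then show "y \<in> orb x" unfolding orbit_def using m_closed[OF h(1) g] by blast
  qed
  show "orb x \<subseteq> orb (act g x)"
  proof
    fix y assume "y \<in> orb x"
    then obtain h where h: "h \<in> carrier G" "y = act h x" unfolding orbit_def by blast
    have "act (h \<otimes>\<^bsub>G\<^esub> inv\<^bsub>G\<^esub> g) (act g x) = y"
      using act_comp[OF h(1) inv_closed[OF g] act_points[OF g x]] act_inv[OF g x] h by simp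
    then show "y \<in> orb (act g x)" unfolding orbit_def
      using m_closed[OF h(1) inv_closed[OF g]] by blast
  qed
qed

lemma orb_eqD:
  assumes x: "x \<in> points S'" and y: "y \<in> points S'" and e: "orb x = orb y"
  shows "\<exists>g\<in>carrier G. act g x = y"
proof -
  have "y \<in> orb x" using group_action.orbit_refl[OF ga y] e by simp
  then show ?thesis unfolding orbit_def by blast
qed

lemma act_fixes_ends:
  assumes p: "p \<in> edges Sfine" and g: "g \<in> carrier G"
    and s: "s = 0 \<or> s = elen p" and t: "t = 0 \<or> t = elen p" and e: "act g (epar p s) = epar p t"
  shows "s = t"
proof (rule ccontr)
  assume "s \<noteq> t"
  then have "(s = 0 \<and> t = elen p) \<or> (s = elen p \<and> t = 0)" using s t by auto
  then show False
  proof
    assume "s = 0 \<and> t = elen p"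
    then have "act g (esrc p) = etgt p" using e by (simp add: esrc_def etgt_def)
    then show False using act_esrc_ne_etgt[OF p g] by simp
  next
    assume "s = elen p \<and> t = 0"
    then have "act g (etgt p) = esrc p" using e by (simp add: esrc_def etgt_def)
    then have "act (inv\<^bsub>G\<^esub> g) (esrc p) = etgt p"
      using act_inv[OF g epar_Sfine_points[OF p, of "elen p"]] wf_elen_pos[OF wf_Sfine p]
      by (simp add: etgt_def)
    then show False using act_esrc_ne_etgt[OF p inv_closed[OF g]] by simp
  qed
qed

text \<open>Distinct points of an edge of \<open>Sfine\<close> lie in distinct orbits, since no \<open>act g\<close> reverses an
  edge or moves a vertex of \<open>Sfine\<close> into the interior of an edge.\<close>

lemma orb_epar_inj:
  assumes p: "p \<in> edges Sfine" and s: "0 \<le> s" "s \<le> elen p" and t: "0 \<le> t" "t \<le> elen p"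
    and e: "orb (epar p s) = orb (epar p t)"
  shows "s = t"
proof -
  obtain g where g: "g \<in> carrier G" "act g (epar p s) = epar p t"
    using orb_eqD[OF epar_Sfine_points[OF p s] epar_Sfine_points[OF p t] e] by blast
  have lp: "elen p > 0" using wf_elen_pos[OF wf_Sfine p] .
  have vert: "epar p x \<in> fine_verts \<longleftrightarrow> x = 0 \<or> x = elen p" if "0 \<le> x" "x \<le> elen p" for x
  proof (cases "0 < x \<and> x < elen p")
    case True
    then show ?thesis using wf_interior_notvert[OF wf_Sfine p, of x] verts_Sfine by auto
  next
    case False
    then have "x = 0 \<or> x = elen p" using that by auto
    then show ?thesis using wf_esrc_vert[OF wf_Sfine p] wf_etgt_vert[OF wf_Sfine p] verts_Sfine
      by (auto simp: esrc_def etgt_def)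
  qed
  have "epar p s \<in> fine_verts \<longleftrightarrow> epar p t \<in> fine_verts"
    using fine_verts_act_iff[OF g(1) epar_Sfine_points[OF p s]] g(2) by simp
  then consider "0 < s" "s < elen p" "0 < t" "t < elen p" | "s = 0 \<or> s = elen p" "t = 0 \<or> t = elen p"
    using vert[OF s] vert[OF t] s t by argo
  then show ?thesis
  proof cases
    case 1
    let ?q = "edge_act g p"
    have q: "?q \<in> edges Sfine" using edge_act_in[OF g(1) p] .
    have ks: "0 < elen ?q / elen p * s" "elen ?q / elen p * s < elen ?q"
      using rescale_in_interior[OF lp _ 1(1,2)] wf_elen_pos[OF wf_Sfine q] by auto
    have "epar p t = epar ?q (elen ?q / elen p * s)" using edge_act_epar[OF g(1) p s] g(2) by simp
    then have "(?q = p \<and> elen ?q / elen p * s = t) \<or> (?q = erev p \<and> elen ?q / elen p * s = elen p - t)"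
      using wf_interior_point_eq[OF wf_Sfine p q 1(3,4) ks] by simp
    then show ?thesis using edge_act_ne_erev[OF g(1) p] lp by auto
  qed (use act_fixes_ends[OF p g(1) _ _ g(2)] in blast)
qed

text \<open>The quotient edge of \<open>p\<close> has weight 1 and length \<open>quot_len p\<close>, the number of elements
  fixing \<open>p\<close> times the geometric mean of \<open>elen / weight\<close> over the orbit of \<open>p\<close>. By harmonicity of
  the action the ratios \<open>reduced_len (edge_act g p) / reduced_len p\<close> depend only on the source of
  \<open>p\<close>, which makes the local degree of the quotient map at a vertex independent of the target edge.\<close>

definition reduced_len :: "'p edge \<Rightarrow> real" where "reduced_len p = elen p / real (weight Sfine p)"

definition edge_stab :: "'p edge \<Rightarrow> 'g set" where "edge_stab p = {g\<in>carrier G. edge_act g p = p}"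

definition quot_len :: "'p edge \<Rightarrow> real" where
  "quot_len p = real (card (edge_stab p)) *
     (\<Prod>g\<in>carrier G. reduced_len (edge_act g p)) powr (1 / real (card (carrier G)))"

lemma reduced_len_pos: "p \<in> edges Sfine \<Longrightarrow> reduced_len p > 0"
  unfolding reduced_len_def using wf_elen_pos[OF wf_Sfine] wf_weight_pos[OF wf_Sfine] by simp

lemma reduced_len_erev: "p \<in> edges Sfine \<Longrightarrow> reduced_len (erev p) = reduced_len p"
  unfolding reduced_len_def using wf_weight_erev[OF wf_Sfine] by simp

lemma card_edge_stab_pos:
  assumes p: "p \<in> edges Sfine"
  shows "card (edge_stab p) > 0"
proof -
  have "\<one>\<^bsub>G\<^esub> \<in> edge_stab p" unfolding edge_stab_def using one_closed edge_act_one[OF p] by simp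
  moreover have "finite (edge_stab p)" using finG unfolding edge_stab_def by simp
  ultimately show ?thesis using card_gt_0_iff by blast
qed

lemma quot_len_pos:
  assumes p: "p \<in> edges Sfine"
  shows "quot_len p > 0"
proof -
  have "(\<Prod>g\<in>carrier G. reduced_len (edge_act g p)) > 0"
    by (intro prod_pos) (simp add: reduced_len_pos edge_act_in p)
  then show ?thesis unfolding quot_len_def using card_edge_stab_pos[OF p] by simp
qed

lemma inv_cancel_left:
  assumes "h \<in> carrier G" "a \<in> carrier G"
  shows "inv\<^bsub>G\<^esub> h \<otimes>\<^bsub>G\<^esub> (h \<otimes>\<^bsub>G\<^esub> a) = a" "h \<otimes>\<^bsub>G\<^esub> (inv\<^bsub>G\<^esub> h \<otimes>\<^bsub>G\<^esub> a) = a"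
proof -
  interpret G: group G by (rule grp)
  show "inv\<^bsub>G\<^esub> h \<otimes>\<^bsub>G\<^esub> (h \<otimes>\<^bsub>G\<^esub> a) = a" "h \<otimes>\<^bsub>G\<^esub> (inv\<^bsub>G\<^esub> h \<otimes>\<^bsub>G\<^esub> a) = a"
    using assms by (simp_all add: G.m_assoc[symmetric])
qed

lemma prod_reduced_len_edge_act:
  assumes h: "h \<in> carrier G" and p: "p \<in> edges Sfine"
  shows "(\<Prod>g\<in>carrier G. reduced_len (edge_act g (edge_act h p))) = (\<Prod>g\<in>carrier G. reduced_len (edge_act g p))"
proof -
  interpret G: group G by (rule grp)
  have "(\<Prod>g\<in>carrier G. reduced_len (edge_act g (edge_act h p)))
      = (\<Prod>g\<in>carrier G. reduced_len (edge_act (g \<otimes>\<^bsub>G\<^esub> h) p))"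
    using edge_act_mult[OF _ h p] by (intro prod.cong) auto
  also have "\<dots> = (\<Prod>g\<in>carrier G. reduced_len (edge_act g p))"
    by (rule prod.reindex_bij_witness[of _ "\<lambda>g. g \<otimes>\<^bsub>G\<^esub> inv\<^bsub>G\<^esub> h" "\<lambda>g. g \<otimes>\<^bsub>G\<^esub> h"])
      (use h in \<open>auto simp: G.m_assoc\<close>)
  finally show ?thesis .
qed

lemma card_edge_stab_edge_act:
  assumes h: "h \<in> carrier G" and p: "p \<in> edges Sfine"
  shows "card (edge_stab (edge_act h p)) = card (edge_stab p)"
proof -
  interpret G: group G by (rule grp)
  have hp: "edge_act h p \<in> edges Sfine" using edge_act_in[OF h p] .
  have conj: "edge_act (h \<otimes>\<^bsub>G\<^esub> g \<otimes>\<^bsub>G\<^esub> inv\<^bsub>G\<^esub> h) (edge_act h p) = edge_act h (edge_act g p)"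
    if g: "g \<in> carrier G" for g
    using edge_act_mult edge_act_inv[OF h p] h g hp by (simp add: G.m_assoc)
  have "bij_betw (\<lambda>g. h \<otimes>\<^bsub>G\<^esub> g \<otimes>\<^bsub>G\<^esub> inv\<^bsub>G\<^esub> h) (edge_stab p) (edge_stab (edge_act h p))"
  proof (rule bij_betw_byWitness[where f' = "\<lambda>g. inv\<^bsub>G\<^esub> h \<otimes>\<^bsub>G\<^esub> g \<otimes>\<^bsub>G\<^esub> h"])
    show "\<forall>a\<in>edge_stab p. inv\<^bsub>G\<^esub> h \<otimes>\<^bsub>G\<^esub> (h \<otimes>\<^bsub>G\<^esub> a \<otimes>\<^bsub>G\<^esub> inv\<^bsub>G\<^esub> h) \<otimes>\<^bsub>G\<^esub> h = a"
      "\<forall>a\<in>edge_stab (edge_act h p). h \<otimes>\<^bsub>G\<^esub> (inv\<^bsub>G\<^esub> h \<otimes>\<^bsub>G\<^esub> a \<otimes>\<^bsub>G\<^esub> h) \<otimes>\<^bsub>G\<^esub> inv\<^bsub>G\<^esub> h = a"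
      using h unfolding edge_stab_def by (auto simp: G.m_assoc inv_cancel_left)
    show "(\<lambda>g. h \<otimes>\<^bsub>G\<^esub> g \<otimes>\<^bsub>G\<^esub> inv\<^bsub>G\<^esub> h) ` edge_stab p \<subseteq> edge_stab (edge_act h p)"
      using conj h unfolding edge_stab_def by auto
    show "(\<lambda>g. inv\<^bsub>G\<^esub> h \<otimes>\<^bsub>G\<^esub> g \<otimes>\<^bsub>G\<^esub> h) ` edge_stab (edge_act h p) \<subseteq> edge_stab p"
    proof (rule image_subsetI)
      fix g assume "g \<in> edge_stab (edge_act h p)"
      then have g: "g \<in> carrier G" "edge_act g (edge_act h p) = edge_act h p"
        unfolding edge_stab_def by auto
      have "edge_act (inv\<^bsub>G\<^esub> h \<otimes>\<^bsub>G\<^esub> g \<otimes>\<^bsub>G\<^esub> h) p = edge_act (inv\<^bsub>G\<^esub> h) (edge_act g (edge_act h p))"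
        using edge_act_mult h g(1) p hp by (simp add: G.m_assoc)
      then show "inv\<^bsub>G\<^esub> h \<otimes>\<^bsub>G\<^esub> g \<otimes>\<^bsub>G\<^esub> h \<in> edge_stab p"
        using g edge_act_inv[OF h p] h unfolding edge_stab_def by simp
    qed
  qed
  then show ?thesis by (rule bij_betw_same_card[symmetric])
qed

lemma quot_len_edge_act: "h \<in> carrier G \<Longrightarrow> p \<in> edges Sfine \<Longrightarrow> quot_len (edge_act h p) = quot_len p"
  unfolding quot_len_def using prod_reduced_len_edge_act card_edge_stab_edge_act by simp

lemma quot_len_erev:
  assumes p: "p \<in> edges Sfine"
  shows "quot_len (erev p) = quot_len p"
proof -
  have "reduced_len (edge_act g (erev p)) = reduced_len (edge_act g p)" if "g \<in> carrier G" for g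
    using edge_act_erev[OF that p] reduced_len_erev[OF edge_act_in[OF that p]] by simp
  moreover have "edge_stab (erev p) = edge_stab p"
    using edge_act_erev[OF _ p] wf_erev_erev[OF wf_Sfine edge_act_in[OF _ p]] wf_erev_erev[OF wf_Sfine p]
    unfolding edge_stab_def by metis
  ultimately show ?thesis unfolding quot_len_def by simp
qed

definition quot_edge :: "'p edge \<Rightarrow> 'p set edge" where
  "quot_edge p = (quot_len p, \<lambda>t. if t \<in> {0..quot_len p} then orb (epar p (elen p / quot_len p * t)) else undefined)"

definition quot_graph :: "'p set wmg" where
  "quot_graph = \<lparr>verts = orb ` fine_verts, edges = quot_edge ` edges Sfine, weight = (\<lambda>_. 1), bdry = orb ` bdry S'\<rparr>"

lemma quot_graph_simps[simp]:
  "verts quot_graph = orb ` fine_verts" "edges quot_graph = quot_edge ` edges Sfine"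
  "weight quot_graph E = 1" "bdry quot_graph = orb ` bdry S'"
  by (simp_all add: quot_graph_def)

lemma elen_quot_edge[simp]: "elen (quot_edge p) = quot_len p"
  by (simp add: quot_edge_def)

lemma epar_quot_edge: "t \<in> {0..quot_len p} \<Longrightarrow> epar (quot_edge p) t = orb (epar p (elen p / quot_len p * t))"
  by (simp add: quot_edge_def)

lemma epar_quot_edge_undefined: "t \<notin> {0..quot_len p} \<Longrightarrow> epar (quot_edge p) t = undefined"
  by (auto simp: quot_edge_def)

lemma quot_edge_param:
  assumes p: "p \<in> edges Sfine"
  shows "t \<in> {0..quot_len p} \<Longrightarrow> elen p / quot_len p * t \<in> {0..elen p}"
    and "0 < t \<Longrightarrow> t < quot_len p \<Longrightarrow> 0 < elen p / quot_len p * t \<and> elen p / quot_len p * t < elen p"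
  using rescale_in_range[of "quot_len p" "elen p" t] rescale_in_interior[of "quot_len p" "elen p" t]
    quot_len_pos[OF p] wf_elen_pos[OF wf_Sfine p] by auto

lemma esrc_quot_edge: "p \<in> edges Sfine \<Longrightarrow> esrc (quot_edge p) = orb (esrc p)"
  using quot_len_pos[of p] by (simp add: esrc_def epar_quot_edge)

lemma erev_erev_quot_edge: "erev (erev (quot_edge p)) = quot_edge p"
  by (rule erev_erev) (simp add: epar_quot_edge_undefined)

lemma quot_edge_eqI:
  assumes "quot_len q = quot_len p"
    and "\<And>t. t \<in> {0..quot_len p} \<Longrightarrow> orb (epar q (elen q / quot_len p * t)) = orb (epar p (elen p / quot_len p * t))"
  shows "quot_edge q = quot_edge p"
  using assms unfolding quot_edge_def by (auto simp: fun_eq_iff)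

lemma quot_edge_edge_act:
  assumes g: "g \<in> carrier G" and p: "p \<in> edges Sfine"
  shows "quot_edge (edge_act g p) = quot_edge p"
proof (rule quot_edge_eqI)
  show "quot_len (edge_act g p) = quot_len p" using quot_len_edge_act[OF g p] .
  fix t assume t: "t \<in> {0..quot_len p}"
  have lp: "elen p > 0" using wf_elen_pos[OF wf_Sfine p] .
  have x: "elen p / quot_len p * t \<in> {0..elen p}" using quot_edge_param(1)[OF p t] .
  have "orb (epar (edge_act g p) (elen (edge_act g p) / quot_len p * t))
      = orb (epar (edge_act g p) (elen (edge_act g p) / elen p * (elen p / quot_len p * t)))"
    using lp by simp
  also have "\<dots> = orb (act g (epar p (elen p / quot_len p * t)))"
    using edge_act_epar[OF g p] x by simp
  also have "\<dots> = orb (epar p (elen p / quot_len p * t))"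
    using orb_act[OF g epar_Sfine_points[OF p]] x by simp
  finally show "orb (epar (edge_act g p) (elen (edge_act g p) / quot_len p * t)) = orb (epar p (elen p / quot_len p * t))" .
qed

lemma erev_quot_edge:
  assumes p: "p \<in> edges Sfine"
  shows "erev (quot_edge p) = quot_edge (erev p)"
proof -
  have lr: "quot_len (erev p) = quot_len p" using quot_len_erev[OF p] .
  have "epar (erev (quot_edge p)) t = epar (quot_edge (erev p)) t" for t
  proof (cases "t \<in> {0..quot_len p}")
    case True
    have x: "elen p / quot_len p * t \<in> {0..elen p}" using quot_edge_param(1)[OF p True] .
    have "elen p / quot_len p * (quot_len p - t) = elen p - elen p / quot_len p * t"
      using quot_len_pos[OF p] by (simp add: field_simps)
    then show ?thesis using True x lr by (simp add: erev_par epar_quot_edge)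
  next
    case False
    then show ?thesis using lr by (auto simp: erev_def quot_edge_def epar_def elen_def)
  qed
  then show ?thesis
    using lr by (simp add: prod_eq_iff epar_def fun_eq_iff erev_def quot_edge_def elen_def)
qed

lemma points_quot_graph: "points quot_graph = orb ` points S'"
proof
  show "orb ` points S' \<subseteq> points quot_graph"
  proof
    fix y assume "y \<in> orb ` points S'"
    then obtain x where x: "x \<in> points S'" "y = orb x" by blast
    then have "x \<in> fine_verts \<or> (\<exists>p\<in>edges Sfine. \<exists>t. 0 < t \<and> t < elen p \<and> x = epar p t)"
      using points_cases[OF wf_Sfine] subdivision_points[OF subdivision_Sfine] verts_Sfine by auto
    then show "y \<in> points quot_graph"
    proof
      assume "\<exists>p\<in>edges Sfine. \<exists>t. 0 < t \<and> t < elen p \<and> x = epar p t"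
      then obtain p t where p: "p \<in> edges Sfine" "0 < t" "t < elen p" "x = epar p t" by blast
      define s where "s = quot_len p / elen p * t"
      have lp: "elen p > 0" using wf_elen_pos[OF wf_Sfine p(1)] .
      have s: "s \<in> {0..quot_len p}"
        using rescale_in_range[of "elen p" "quot_len p" t] lp quot_len_pos[OF p(1)] p unfolding s_def by auto
      have "epar (quot_edge p) s = y"
        using epar_quot_edge[OF s] p x lp quot_len_pos[OF p(1)] unfolding s_def by simp
      then show ?thesis using s p(1) unfolding points_def by force
    qed (use x in \<open>auto simp: points_def\<close>)
  qed
  show "points quot_graph \<subseteq> orb ` points S'"
  proof
    fix y assume "y \<in> points quot_graph"
    then consider "y \<in> orb ` fine_verts" | p t where "p \<in> edges Sfine" "t \<in> {0..quot_len p}" "y = epar (quot_edge p) t"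
      unfolding points_def by auto
    then show "y \<in> orb ` points S'"
    proof cases
      case (2 p t)
      then show ?thesis
        using epar_quot_edge[OF 2(2)] epar_Sfine_points[OF 2(1)] quot_edge_param(1)[OF 2(1,2)]
        by auto
    qed (use fine_verts_points in blast)
  qed
qed

lemma inj_on_epar_quot_edge:
  assumes p: "p \<in> edges Sfine"
  shows "inj_on (epar (quot_edge p)) {0..elen (quot_edge p)}"
proof (rule inj_onI)
  fix s t assume "s \<in> {0..elen (quot_edge p)}" "t \<in> {0..elen (quot_edge p)}"
    and st: "epar (quot_edge p) s = epar (quot_edge p) t"
  then have s: "s \<in> {0..quot_len p}" and t: "t \<in> {0..quot_len p}" by auto
  have "orb (epar p (elen p / quot_len p * s)) = orb (epar p (elen p / quot_len p * t))"
    using st epar_quot_edge[OF s] epar_quot_edge[OF t] by simp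
  moreover have a: "0 \<le> elen p / quot_len p * s" "elen p / quot_len p * s \<le> elen p"
    and b: "0 \<le> elen p / quot_len p * t" "elen p / quot_len p * t \<le> elen p"
    using quot_edge_param(1)[OF p s] quot_edge_param(1)[OF p t] by auto
  ultimately have "elen p / quot_len p * s = elen p / quot_len p * t"
    using orb_epar_inj[OF p a b] by blast
  then show "s = t" using wf_elen_pos[OF wf_Sfine p] quot_len_pos[OF p] by simp
qed

lemma einterior_quot_edge:
  assumes p: "p \<in> edges Sfine"
  shows "einterior (quot_edge p) \<inter> verts quot_graph = {}"
proof -
  have False if t: "0 < t" "t < quot_len p" and w: "w \<in> fine_verts"
    and e: "orb (epar p (elen p / quot_len p * t)) = orb w" for t w
  proof -
    note x = quot_edge_param(2)[OF p t]
    have wP: "w \<in> points S'" using w fine_verts_points by auto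
    have xP: "epar p (elen p / quot_len p * t) \<in> points S'" using epar_Sfine_points[OF p] x by simp
    obtain g where g: "g \<in> carrier G" "act g w = epar p (elen p / quot_len p * t)"
      using orb_eqD[OF wP xP] e by metis
    then have "epar p (elen p / quot_len p * t) \<in> fine_verts"
      using fine_verts_act_iff[OF g(1) wP] w by simp
    then show False using wf_interior_notvert[OF wf_Sfine p] x verts_Sfine by simp
  qed
  then have "epar (quot_edge p) t \<notin> verts quot_graph" if "0 < t" "t < quot_len p" for t
    using that epar_quot_edge[of t p] by auto
  then show ?thesis unfolding einterior_def by fastforce
qed

lemma quot_edge_conditions:
  assumes p: "p \<in> edges Sfine"
  shows "elen (quot_edge p) > 0 \<and>
      (\<forall>x. x \<notin> {0..elen (quot_edge p)} \<longrightarrow> epar (quot_edge p) x = undefined) \<and>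
      inj_on (epar (quot_edge p)) {0..elen (quot_edge p)} \<and>
      esrc (quot_edge p) \<in> verts quot_graph \<and> etgt (quot_edge p) \<in> verts quot_graph \<and>
      esrc (quot_edge p) \<noteq> etgt (quot_edge p) \<and>
      einterior (quot_edge p) \<inter> verts quot_graph = {} \<and>
      erev (quot_edge p) \<in> edges quot_graph \<and>
      weight quot_graph (erev (quot_edge p)) = weight quot_graph (quot_edge p) \<and>
      weight quot_graph (quot_edge p) > 0"
proof -
  have la: "quot_len p > 0" using quot_len_pos[OF p] .
  have sv: "esrc p \<in> fine_verts" "etgt p \<in> fine_verts"
    using wf_esrc_vert[OF wf_Sfine p] wf_etgt_vert[OF wf_Sfine p] verts_Sfine by auto
  then have sP: "esrc p \<in> points S'" "etgt p \<in> points S'" using fine_verts_points by auto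
  have ends: "esrc (quot_edge p) = orb (esrc p)" "etgt (quot_edge p) = orb (etgt p)"
    using la wf_elen_pos[OF wf_Sfine p] by (simp_all add: esrc_def etgt_def epar_quot_edge)
  have "orb (esrc p) \<noteq> orb (etgt p)"
  proof
    assume "orb (esrc p) = orb (etgt p)"
    then obtain g where "g \<in> carrier G" "act g (esrc p) = etgt p" using orb_eqD[OF sP] by blast
    then show False using act_esrc_ne_etgt[OF p] by blast
  qed
  moreover have "erev (quot_edge p) \<in> edges quot_graph"
    using erev_quot_edge[OF p] wf_erev_edge[OF wf_Sfine p] by simp
  moreover have "\<forall>x. x \<notin> {0..elen (quot_edge p)} \<longrightarrow> epar (quot_edge p) x = undefined"
    using epar_quot_edge_undefined by simp
  ultimately show ?thesis
    using la inj_on_epar_quot_edge[OF p] einterior_quot_edge[OF p] ends sv by simp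
qed

lemma quot_edge_interiors_disjoint:
  assumes E: "E1 \<in> edges quot_graph" "E2 \<in> edges quot_graph" "E2 \<noteq> E1" "E2 \<noteq> erev E1"
  shows "einterior E1 \<inter> einterior E2 = {}"
proof (rule ccontr)
  assume "einterior E1 \<inter> einterior E2 \<noteq> {}"
  then obtain t1 t2 where t: "0 < t1" "t1 < elen E1" "0 < t2" "t2 < elen E2" "epar E1 t1 = epar E2 t2"
    unfolding einterior_def by auto
  obtain p1 p2 where p: "p1 \<in> edges Sfine" "E1 = quot_edge p1" "p2 \<in> edges Sfine" "E2 = quot_edge p2"
    using E(1,2) by auto
  define x1 x2 where "x1 = elen p1 / quot_len p1 * t1" and "x2 = elen p2 / quot_len p2 * t2"
  have x1: "0 < x1" "x1 < elen p1" and x2: "0 < x2" "x2 < elen p2"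
    using quot_edge_param(2)[OF p(1)] quot_edge_param(2)[OF p(3)] t p unfolding x1_def x2_def
    by auto
  have "orb (epar p1 x1) = orb (epar p2 x2)" using t p epar_quot_edge x1_def x2_def by simp
  then obtain g where g: "g \<in> carrier G" "act g (epar p1 x1) = epar p2 x2"
    using orb_eqD epar_Sfine_points[OF p(1)] epar_Sfine_points[OF p(3)] x1 x2 by (metis less_imp_le)
  let ?q = "edge_act g p1"
  have q: "?q \<in> edges Sfine" using edge_act_in[OF g(1) p(1)] .
  have "0 < elen ?q / elen p1 * x1" "elen ?q / elen p1 * x1 < elen ?q"
    using rescale_in_interior[OF _ _ x1] wf_elen_pos[OF wf_Sfine q] wf_elen_pos[OF wf_Sfine p(1)]
    by auto
  moreover have "epar p2 x2 = epar ?q (elen ?q / elen p1 * x1)"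
    using edge_act_epar[OF g(1) p(1)] x1 g(2) by simp
  ultimately have "?q = p2 \<or> ?q = erev p2"
    using wf_interior_point_eq[OF wf_Sfine p(3) q x2] by blast
  then show False
  proof
    assume "?q = p2"
    then have "E2 = E1" using quot_edge_edge_act[OF g(1) p(1)] p by simp
    then show False using E(3) by simp
  next
    assume "?q = erev p2"
    then have "E1 = erev E2"
      using quot_edge_edge_act[OF g(1) p(1)] erev_quot_edge[OF p(3)] p by simp
    then have "E2 = erev E1" using p erev_erev_quot_edge by simp
    then show False using E(4) by simp
  qed
qed

lemma wf_quot_graph: "wf_wmg quot_graph"
proof -
  have "bdry S' \<subseteq> fine_verts"
    using wf_bdry_verts[OF wfS'] verts_witness_verts witness_verts_inv_verts unfolding fine_verts_def by blast
  then show ?thesis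
    unfolding wf_wmg_def using finite_fine_verts wf_finite_edges[OF wf_Sfine] quot_edge_conditions
      quot_edge_interiors_disjoint by auto
qed

lemma maps_onto_quot_edge: "p \<in> edges Sfine \<Longrightarrow> maps_onto orb p (quot_edge p)"
  unfolding maps_onto_def
proof
  fix x assume p: "p \<in> edges Sfine" and x: "x \<in> {0..elen p}"
  have lp: "elen p > 0" and la: "quot_len p > 0"
    using wf_elen_pos[OF wf_Sfine p] quot_len_pos[OF p] .
  have "epar (quot_edge p) (quot_len p / elen p * x) = orb (epar p (elen p / quot_len p * (quot_len p / elen p * x)))"
    using epar_quot_edge rescale_in_range[OF lp _ x] la by simp
  then show "orb (epar p x) = epar (quot_edge p) (elen (quot_edge p) / elen p * x)"
    using lp la by simp
qed

lemma maps_onto_quot_edge_iff: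
  assumes p: "p \<in> edges Sfine" and E: "E \<in> edges quot_graph"
  shows "maps_onto orb p E \<longleftrightarrow> E = quot_edge p"
  using maps_onto_unique[OF wf_quot_graph _ E wf_elen_pos[OF wf_Sfine p] maps_onto_quot_edge[OF p]]
    maps_onto_quot_edge[OF p] p by auto

lemma quot_edge_eq_conj:
  assumes p: "p \<in> edges Sfine" and p1: "p1 \<in> edges Sfine" and e: "quot_edge p = quot_edge p1"
  shows "\<exists>g\<in>carrier G. edge_act g p1 = p"
proof -
  have lp: "elen p > 0" and lp1: "elen p1 > 0"
    using wf_elen_pos[OF wf_Sfine p] wf_elen_pos[OF wf_Sfine p1] .
  have ll: "quot_len p1 = quot_len p" using arg_cong[OF e, of elen] by simp
  have m: "quot_len p / 2 \<in> {0..quot_len p}" using quot_len_pos[OF p] by simp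
  have "orb (epar p1 (elen p1 / 2)) = orb (epar p (elen p / 2))"
    using epar_quot_edge[OF m] epar_quot_edge[of "quot_len p / 2" p1] m ll e quot_len_pos[OF p]
    by simp
  moreover have "epar p1 (elen p1 / 2) \<in> points S'" "epar p (elen p / 2) \<in> points S'"
    using epar_Sfine_points[OF p1, of "elen p1 / 2"] epar_Sfine_points[OF p, of "elen p / 2"] lp lp1
    by auto
  ultimately obtain g where g: "g \<in> carrier G" "act g (epar p1 (elen p1 / 2)) = epar p (elen p / 2)"
    using orb_eqD by blast
  let ?q = "edge_act g p1"
  have q: "?q \<in> edges Sfine" using edge_act_in[OF g(1) p1] .
  have "epar p (elen p / 2) = epar ?q (elen ?q / 2)"
    using edge_act_epar[OF g(1) p1, of "elen p1 / 2"] g(2) lp1 by simp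
  then have "?q = p \<or> ?q = erev p"
    using wf_interior_point_eq[OF wf_Sfine p q, of "elen p / 2" "elen ?q / 2"] lp wf_elen_pos[OF wf_Sfine q]
    by auto
  moreover have "?q \<noteq> erev p"
  proof
    assume "?q = erev p"
    then have "erev (quot_edge p) = quot_edge p"
      using quot_edge_edge_act[OF g(1) p1] erev_quot_edge[OF p] e by simp
    moreover have "quot_edge p \<in> edges quot_graph" using p by simp
    ultimately show False using wf_erev_neq[OF wf_quot_graph] by blast
  qed
  ultimately show ?thesis using g(1) by blast
qed

lemma reduced_len_ratio_const:
  assumes g: "g \<in> carrier G" and v: "v' \<in> fine_verts" "v' \<notin> bdry S'"
    and p: "p \<in> edges Sfine" "esrc p = v'" and q: "q \<in> edges Sfine" "esrc q = v'"
  shows "reduced_len (edge_act g q) / reduced_len q = reduced_len (edge_act g p) / reduced_len p"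
proof -
  obtain c where c: "\<forall>f\<in>edges Sfine. esrc f = act g v' \<longrightarrow>
      (\<Sum>p'\<in>{p'\<in>edges Sfine. esrc p' = v' \<and> maps_onto (act g) p' f}.
          real (weight Sfine p') / real (weight Sfine f) * (elen f / elen p')) = c"
    using act_Sfine(3)[OF g] v verts_Sfine bdry_Sfine unfolding harmonic_at_def by blast
  have "reduced_len (edge_act g r) / reduced_len r = c" if r: "r \<in> edges Sfine" "esrc r = v'" for r
  proof -
    let ?f = "edge_act g r"
    have f: "?f \<in> edges Sfine" "esrc ?f = act g v'"
      using edge_act_in[OF g r(1)] esrc_edge_act[OF g r(1)] r by auto
    have S: "{p'\<in>edges Sfine. esrc p' = v' \<and> maps_onto (act g) p' ?f} = {r}"
      using edge_act_eqI[OF g _ f(1)] edge_act_inj[OF g _ r(1)] edge_act_maps[OF g r(1)] r by blast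
    have "(\<Sum>p'\<in>{p'\<in>edges Sfine. esrc p' = v' \<and> maps_onto (act g) p' ?f}.
        real (weight Sfine p') / real (weight Sfine ?f) * (elen ?f / elen p')) = c" using c f by blast
    then have "real (weight Sfine r) / real (weight Sfine ?f) * (elen ?f / elen r) = c"
      unfolding S by simp
    then show ?thesis
      unfolding reduced_len_def using wf_elen_pos[OF wf_Sfine r(1)] wf_weight_pos[OF wf_Sfine r(1)]
        wf_elen_pos[OF wf_Sfine f(1)] wf_weight_pos[OF wf_Sfine f(1)] by (simp add: field_simps)
  qed
  then show ?thesis using p q by simp
qed

definition orbit_ratio :: "'p edge \<Rightarrow> real" where
  "orbit_ratio p = (\<Prod>g\<in>carrier G. reduced_len (edge_act g p) / reduced_len p) powr (1 / real (card (carrier G)))"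

lemma orbit_ratio_eq:
  assumes "v' \<in> fine_verts" "v' \<notin> bdry S'" "p \<in> edges Sfine" "esrc p = v'" "q \<in> edges Sfine" "esrc q = v'"
  shows "orbit_ratio q = orbit_ratio p"
  unfolding orbit_ratio_def using reduced_len_ratio_const[OF _ assms] by (simp cong: prod.cong)

lemma quot_len_div_reduced_len:
  assumes p: "p \<in> edges Sfine"
  shows "quot_len p / reduced_len p = real (card (edge_stab p)) * orbit_ratio p"
proof -
  let ?n = "card (carrier G)"
  have mp: "reduced_len p > 0" using reduced_len_pos[OF p] .
  have n: "?n > 0" using finG one_closed card_gt_0_iff by blast
  have "(\<Prod>g\<in>carrier G. reduced_len (edge_act g p))
      = (\<Prod>g\<in>carrier G. reduced_len p * (reduced_len (edge_act g p) / reduced_len p))"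
    using mp by (intro prod.cong) auto
  also have "\<dots> = reduced_len p ^ ?n * (\<Prod>g\<in>carrier G. reduced_len (edge_act g p) / reduced_len p)"
    by (simp only: prod.distrib prod_constant)
  finally have "(\<Prod>g\<in>carrier G. reduced_len (edge_act g p))
      = reduced_len p ^ ?n * (\<Prod>g\<in>carrier G. reduced_len (edge_act g p) / reduced_len p)" .
  moreover have "(reduced_len p ^ ?n) powr (1 / real ?n) = reduced_len p"
    using mp n by (simp add: powr_realpow[symmetric] powr_powr)
  moreover have "(\<Prod>g\<in>carrier G. reduced_len (edge_act g p) / reduced_len p) > 0"
    using reduced_len_pos edge_act_in[OF _ p] mp by (simp add: prod_pos)
  ultimately show ?thesis unfolding quot_len_def orbit_ratio_def using mp by (simp add: powr_mult)
qed

lemma card_transporter: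
  assumes p1: "p1 \<in> edges Sfine" and g1: "g1 \<in> carrier G"
  shows "card {g\<in>carrier G. edge_act g p1 = edge_act g1 p1} = card (edge_stab (edge_act g1 p1))"
proof -
  interpret G: group G by (rule grp)
  let ?p = "edge_act g1 p1"
  have p: "?p \<in> edges Sfine" using edge_act_in[OF g1 p1] .
  have p1_back: "edge_act (inv\<^bsub>G\<^esub> g1) ?p = p1" using edge_act_inv[OF g1 p1] .
  have "bij_betw (\<lambda>g. g \<otimes>\<^bsub>G\<^esub> inv\<^bsub>G\<^esub> g1) {g\<in>carrier G. edge_act g p1 = ?p} (edge_stab ?p)"
  proof (rule bij_betw_byWitness[where f' = "\<lambda>g. g \<otimes>\<^bsub>G\<^esub> g1"])
    show "\<forall>a\<in>{g\<in>carrier G. edge_act g p1 = ?p}. a \<otimes>\<^bsub>G\<^esub> inv\<^bsub>G\<^esub> g1 \<otimes>\<^bsub>G\<^esub> g1 = a"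
      "\<forall>a\<in>edge_stab ?p. a \<otimes>\<^bsub>G\<^esub> g1 \<otimes>\<^bsub>G\<^esub> inv\<^bsub>G\<^esub> g1 = a"
      using g1 unfolding edge_stab_def by (simp_all add: G.m_assoc)
    show "(\<lambda>g. g \<otimes>\<^bsub>G\<^esub> inv\<^bsub>G\<^esub> g1) ` {g\<in>carrier G. edge_act g p1 = ?p} \<subseteq> edge_stab ?p"
    proof (rule image_subsetI)
      fix g assume "g \<in> {g\<in>carrier G. edge_act g p1 = ?p}"
      then have g: "g \<in> carrier G" "edge_act g p1 = ?p" by auto
      have "edge_act (g \<otimes>\<^bsub>G\<^esub> inv\<^bsub>G\<^esub> g1) ?p = edge_act g p1"
        using edge_act_mult[OF g(1) inv_closed[OF g1] p] p1_back by simp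
      then show "g \<otimes>\<^bsub>G\<^esub> inv\<^bsub>G\<^esub> g1 \<in> edge_stab ?p"
        unfolding edge_stab_def using g g1 by simp
    qed
    show "(\<lambda>g. g \<otimes>\<^bsub>G\<^esub> g1) ` edge_stab ?p \<subseteq> {g\<in>carrier G. edge_act g p1 = ?p}"
    proof (rule image_subsetI)
      fix g assume "g \<in> edge_stab ?p"
      then have g: "g \<in> carrier G" "edge_act g ?p = ?p" unfolding edge_stab_def by auto
      then have "edge_act (g \<otimes>\<^bsub>G\<^esub> g1) p1 = ?p" using edge_act_mult[OF g(1) g1 p1] by simp
      then show "g \<otimes>\<^bsub>G\<^esub> g1 \<in> {g\<in>carrier G. edge_act g p1 = ?p}" using g g1 by simp
    qed
  qed
  then show ?thesis by (rule bij_betw_same_card)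
qed

text \<open>Orbit counting: sorting the stabilizer of \<open>v'\<close> by the image of one edge \<open>p1\<close> at \<open>v'\<close>.\<close>

lemma card_stabilizer_sum_edge_stab:
  assumes v: "v' \<in> points S'" and p1: "p1 \<in> edges Sfine" "esrc p1 = v'"
  shows "(\<Sum>p\<in>{p\<in>edges Sfine. esrc p = v' \<and> quot_edge p = quot_edge p1}. real (card (edge_stab p)))
         = real (card (stabilizer G act v'))"
proof -
  let ?A = "{p\<in>edges Sfine. esrc p = v' \<and> quot_edge p = quot_edge p1}"
  let ?F = "\<lambda>p. {g\<in>carrier G. edge_act g p1 = p}"
  have U: "stabilizer G act v' = (\<Union>p\<in>?A. ?F p)"
  proof (intro equalityI subsetI)
    fix g assume "g \<in> stabilizer G act v'"
    then have g: "g \<in> carrier G" "act g v' = v'" unfolding stabilizer_def by auto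
    then have "edge_act g p1 \<in> ?A"
      using edge_act_in[OF g(1) p1(1)] esrc_edge_act[OF g(1) p1(1)] quot_edge_edge_act[OF g(1) p1(1)] p1 by simp
    then show "g \<in> (\<Union>p\<in>?A. ?F p)" using g by blast
  next
    fix g assume "g \<in> (\<Union>p\<in>?A. ?F p)"
    then obtain p where p: "p \<in> ?A" "g \<in> carrier G" "edge_act g p1 = p" by blast
    then have "act g v' = v'" using esrc_edge_act[OF p(2) p1(1)] p1(2) by simp
    then show "g \<in> stabilizer G act v'" unfolding stabilizer_def using p(2) by simp
  qed
  have cF: "card (?F p) = card (edge_stab p)" if p: "p \<in> ?A" for p
  proof -
    have pA: "p \<in> edges Sfine" "quot_edge p = quot_edge p1" using p by auto
    obtain g1 where "g1 \<in> carrier G" "edge_act g1 p1 = p"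
      using quot_edge_eq_conj[OF pA(1) p1(1) pA(2)] by blast
    then show ?thesis using card_transporter[OF p1(1)] by blast
  qed
  have "card (stabilizer G act v') = (\<Sum>p\<in>?A. card (?F p))"
    unfolding U
  proof (rule card_UN_disjoint)
    show "finite ?A" using wf_finite_edges[OF wf_Sfine] by simp
    show "\<forall>p\<in>?A. finite (?F p)" using finG by simp
    show "\<forall>p\<in>?A. \<forall>p'\<in>?A. p \<noteq> p' \<longrightarrow> ?F p \<inter> ?F p' = {}" by blast
  qed
  also have "\<dots> = (\<Sum>p\<in>?A. card (edge_stab p))" by (rule sum.cong[OF refl]) (rule cF)
  finally show ?thesis by (simp add: of_nat_sum)
qed

lemma local_degree_quot:
  assumes v: "v' \<in> fine_verts" "v' \<notin> bdry S'" and p0: "p0 \<in> edges Sfine" "esrc p0 = v'"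
    and E: "E \<in> edges quot_graph" "esrc E = orb v'"
  shows "local_degree Sfine quot_graph orb v' E = orbit_ratio p0 * real (card (stabilizer G act v'))"
proof -
  have vP: "v' \<in> points S'" using v fine_verts_points by auto
  obtain q where q: "q \<in> edges Sfine" "E = quot_edge q" using E(1) by auto
  have "orb (esrc q) = orb v'" using E(2) esrc_quot_edge[OF q(1)] q by simp
  moreover have "esrc q \<in> points S'"
    using wf_esrc_vert[OF wf_Sfine q(1)] verts_Sfine fine_verts_points by auto
  ultimately obtain g where g: "g \<in> carrier G" "act g (esrc q) = v'" using orb_eqD vP by blast
  define p1 where "p1 = edge_act g q"
  have p1: "p1 \<in> edges Sfine" "esrc p1 = v'" "quot_edge p1 = E"
    using edge_act_in[OF g(1) q(1)] esrc_edge_act[OF g(1) q(1)] quot_edge_edge_act[OF g(1) q(1)] g q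
    unfolding p1_def by auto
  have "{p\<in>edges Sfine. esrc p = v' \<and> maps_onto orb p E} = {p\<in>edges Sfine. esrc p = v' \<and> quot_edge p = quot_edge p1}"
  proof (intro Collect_cong)
    fix p show "(p \<in> edges Sfine \<and> esrc p = v' \<and> maps_onto orb p E)
        = (p \<in> edges Sfine \<and> esrc p = v' \<and> quot_edge p = quot_edge p1)"
      using maps_onto_quot_edge_iff[OF _ E(1), of p] p1(3) by auto
  qed
  then have "local_degree Sfine quot_graph orb v' E
      = (\<Sum>p\<in>{p\<in>edges Sfine. esrc p = v' \<and> quot_edge p = quot_edge p1}. orbit_ratio p0 * real (card (edge_stab p)))"
    unfolding local_degree_def
  proof (intro sum.cong)
    fix p assume "p \<in> {p\<in>edges Sfine. esrc p = v' \<and> quot_edge p = quot_edge p1}"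
    then have p: "p \<in> edges Sfine" "esrc p = v'" "E = quot_edge p" using p1(3) by auto
    have "real (weight Sfine p) / real (weight quot_graph E) * (elen E / elen p) = quot_len p / reduced_len p"
      unfolding reduced_len_def using p(3) wf_elen_pos[OF wf_Sfine p(1)] wf_weight_pos[OF wf_Sfine p(1)] by simp
    then show "real (weight Sfine p) / real (weight quot_graph E) * (elen E / elen p)
        = orbit_ratio p0 * real (card (edge_stab p))"
      using quot_len_div_reduced_len[OF p(1)] orbit_ratio_eq[OF v p0 p(1,2)] by simp
  qed
  also have "\<dots> = orbit_ratio p0 * real (card (stabilizer G act v'))"
    using card_stabilizer_sum_edge_stab[OF vP p1(1,2)] by (simp add: sum_distrib_left[symmetric])
  finally show ?thesis .
qed

lemma harmonic_at_quot:
  assumes v: "v' \<in> fine_verts" "v' \<notin> bdry S'"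
  shows "harmonic_at Sfine quot_graph orb v'"
proof (cases "\<exists>p\<in>edges Sfine. esrc p = v'")
  case True
  then obtain p0 where p0: "p0 \<in> edges Sfine" "esrc p0 = v'" by blast
  then show ?thesis unfolding harmonic_at_iff using local_degree_quot[OF v p0] by blast
next
  case False
  then show ?thesis by (rule harmonic_at_no_edges)
qed

lemma pl_comb_quot: "pl_comb Sfine quot_graph orb"
  unfolding pl_comb_def
proof (intro conjI ballI impI)
  show "orb ` points Sfine \<subseteq> points quot_graph"
    using points_quot_graph subdivision_points[OF subdivision_Sfine] by simp
  show "orb ` verts Sfine \<subseteq> verts quot_graph" using verts_Sfine by simp
  show "contracted orb p \<or> (\<exists>E\<in>edges quot_graph. maps_onto orb p E)" if "p \<in> edges Sfine" for p
    using maps_onto_quot_edge[OF that] that by auto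
next
  fix v' assume v': "v' \<in> verts Sfine" and "orb v' \<in> bdry quot_graph \<and> (\<exists>e'\<in>edges Sfine. esrc e' = v' \<and> \<not> contracted orb e')"
  then obtain b where b: "b \<in> bdry S'" "orb v' = orb b" by auto
  have bP: "b \<in> points S'" using b wf_bdry_verts[OF wfS'] verts_subset_points[of S'] by blast
  have vP: "v' \<in> points S'" using v' verts_Sfine fine_verts_points by auto
  obtain g where "g \<in> carrier G" "act g b = v'" using orb_eqD[OF bP vP] b(2) by auto
  then have "v' \<in> bdry S'" using bdG b(1) by blast
  then show "v' \<in> bdry Sfine" using bdry_Sfine by simp
qed

lemma is_quotient_quot_graph: "is_quotient G act S' quot_graph orb"
  unfolding is_quotient_def
proof (intro conjI)
  show "harmonic S' quot_graph orb"
    unfolding harmonic_def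
    using subdivision_Sfine subdivision_refl[OF wf_quot_graph] pl_comb_quot harmonic_at_quot verts_Sfine bdry_Sfine by blast
  show "orb ` points S' = points quot_graph" using points_quot_graph by simp
  show "\<forall>g\<in>carrier G. \<forall>x\<in>points S'. orb (act g x) = orb x" using orb_act by blast
  show "\<forall>x\<in>points S'. \<forall>y\<in>points S'. orb x = orb y \<longrightarrow> (\<exists>g\<in>carrier G. act g x = y)"
    using orb_eqD by blast
  show "{x \<in> points S'. orb x \<in> bdry quot_graph} = bdry S'"
  proof (intro equalityI subsetI)
    fix x assume "x \<in> {x \<in> points S'. orb x \<in> bdry quot_graph}"
    then obtain b where b: "x \<in> points S'" "b \<in> bdry S'" "orb x = orb b" by auto
    have "b \<in> points S'" using b wf_bdry_verts[OF wfS'] verts_subset_points[of S'] by blast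
    then obtain g where "g \<in> carrier G" "act g b = x" using orb_eqD b by metis
    then show "x \<in> bdry S'" using bdG b by blast
  next
    fix x assume "x \<in> bdry S'"
    then show "x \<in> {x \<in> points S'. orb x \<in> bdry quot_graph}"
      using wf_bdry_verts[OF wfS'] verts_subset_points[of S'] by auto
  qed
qed

lemma quotient_exists: "\<exists>(S :: 'p set wmg) \<pi>. wf_wmg S \<and> is_quotient G act S' S \<pi>"
  using wf_quot_graph is_quotient_quot_graph by blast

end

theorem proposition3p20:
  fixes G :: "('g, 'm) monoid_scheme" and act :: "'g \<Rightarrow> 'p \<Rightarrow> 'p" and S' :: "'p wmg"
  assumes "wf_wmg S'"
    and "group G" and "finite (carrier G)"
    and "group_action G (points S') act"
    and "\<forall>g\<in>carrier G. harmonic S' S' (act g)"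
    and "\<forall>g\<in>carrier G. act g ` bdry S' \<subseteq> bdry S'"
  shows "(\<exists>(S :: 'p set wmg) \<pi>. wf_wmg S \<and> is_quotient G act S' S \<pi>) \<and>
         (\<forall>(S1 :: 'q wmg) (S2 :: 'r wmg) \<pi>1 \<pi>2.
            wf_wmg S1 \<and> is_quotient G act S' S1 \<pi>1 \<and>
            wf_wmg S2 \<and> is_quotient G act S' S2 \<pi>2 \<longrightarrow>
            (\<exists>h. harmonic_iso S1 S2 h \<and> (\<forall>x\<in>points S'. h (\<pi>1 x) = \<pi>2 x)))"
proof -
  interpret harmonic_action G act S'
    by (rule harmonic_action.intro[OF finite_action.intro[OF assms(1,3)]
          harmonic_action_axioms.intro[OF assms(2,4-6)]])
  show ?thesis using quotient_exists quotient_unique by blast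
qed

end
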